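(* Let $A$ be an essential arrangement of affine hyperplanes in a real affine space $V$, $f_0$ a non-constant affine-linear function, and for large $t$ let $A_t=A\cup\{\{f_0=t\}\}$. Let $H=\{f=0\}$ belong to $A$, let $\alpha\in\mathbb C$, let $\Delta$ be a growing domain of $A$, $\Delta_t=\Delta\cap\{f_0<t\}$ the corresponding bounded domain of $A_t$, and $g$ a branch of $f^\alpha$ on $\Delta$. Then $|f|$ is bounded on $\Delta$ if and only if $tr(\Delta)\subset tr(H)$, and this condition is equivalent to $h$ vanishing on $tr(\Delta)$, where $h=f^0/f_0^0$. Moreover, if $|f|$ is bounded on $\Delta$, then for every sufficiently large $t$, $c(g,\Delta_t)=c(g,\Delta,f_0)$.
   Context: Domains and faces are as usual, and a domain is growing if it is unbounded and $f_0\to+\infty$ at infinity within it. In the projective completion $\bar V=V\cup H_\infty$, $tr(H)=\bar H\cap H_\infty$, and $tr(\Delta)$ is the face of highest dimension among faces of $\bar A$ lying in $H_\infty$ contained in $\bar\Delta\cap H_\infty$. $h([v])=f^0(v)/f_0^0(v)$ is defined on $H_\infty\setminus\overline{\{f_0=0\}}$, where $f^0$ is the linear part. The external support of a face $D$ on which $|f|$ is bounded is the face of highest dimension in the set of points of $\bar D$ where $|f|$ is maximal. $c(g,\Delta_t)$ is the value of $g$ on the external support of $\Delta_t$ (in $A_t$) with respect to $f$, and when $|f|$ is bounded on $\Delta$, $c(g,\Delta,f_0)$ is the value of $g$ on the external support of $\Delta$ (in $A$) with respect to $f$. *)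

theory Defs
  imports "HOL-Analysis.Analysis"
begin

text \<open>The real affine space V is modelled as real^'n (any finite dimension).
Points at infinity [v] of the projective completion are represented by the
nonzero vectors v (so subsets of the hyperplane at infinity are represented by
symmetric cones in V - {0}).\<close>

definition affine_fun :: "(real^'n \<Rightarrow> real) \<Rightarrow> bool" where
  "affine_fun f \<longleftrightarrow> (\<exists>a b. f = (\<lambda>x. a \<bullet> x + b))"

definition lin_part :: "(real^'n \<Rightarrow> real) \<Rightarrow> real^'n \<Rightarrow> real" where
  "lin_part f v = f v - f 0"

definition is_hyperplane :: "(real^'n) set \<Rightarrow> bool" where
  "is_hyperplane H \<longleftrightarrow> (\<exists>a b. a \<noteq> 0 \<and> H = {x. a \<bullet> x = b})"

definition arrangement :: "(real^'n) set set \<Rightarrow> bool" where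
  "arrangement A \<longleftrightarrow> finite A \<and> (\<forall>H\<in>A. is_hyperplane H)"

definition lin_hyp :: "(real^'n) set \<Rightarrow> (real^'n) set" where
  "lin_hyp H = {u - w | u w. u \<in> H \<and> w \<in> H}"

definition essential :: "(real^'n) set set \<Rightarrow> bool" where
  "essential A \<longleftrightarrow> \<Inter> (lin_hyp ` A) = {0}"

definition face :: "(real^'n) set set \<Rightarrow> (real^'n) set \<Rightarrow> bool" where
  "face A F \<longleftrightarrow> (\<exists>S\<subseteq>A. F \<in> components (\<Inter> S - \<Union> (A - S)))"

definition domain :: "(real^'n) set set \<Rightarrow> (real^'n) set \<Rightarrow> bool" where
  "domain A D \<longleftrightarrow> D \<in> components (UNIV - \<Union> A)"

definition growing_domain ::
  "(real^'n) set set \<Rightarrow> (real^'n \<Rightarrow> real) \<Rightarrow> (real^'n) set \<Rightarrow> bool" where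
  "growing_domain A f0 D \<longleftrightarrow> domain A D \<and> \<not> bounded D \<and>
     filterlim f0 at_top (inf at_infinity (principal D))"

text \<open>faces of the closure of A lying in the hyperplane at infinity: the faces of the
arrangement induced on H_infinity by the tr(H); such a projective face corresponds to
the cone C \<union> -C where C is a component of a stratum (minus 0) of the central
arrangement of the lin_hyp H.\<close>
definition inf_face :: "(real^'n) set set \<Rightarrow> (real^'n) set \<Rightarrow> bool" where
  "inf_face A T \<longleftrightarrow> (\<exists>S\<subseteq>lin_hyp ` A. \<exists>C \<in> components (\<Inter> S - \<Union> (lin_hyp ` A - S) - {0}).
        T = C \<union> uminus ` C)"

text \<open>tr(H) = closure of H intersected with H_infinity\<close>
definition tr_hyp :: "(real^'n) set \<Rightarrow> (real^'n) set" where
  "tr_hyp H = lin_hyp H - {0}"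

text \<open>closure of D intersected with H_infinity (points [v:0] of the projective closure)\<close>
definition inf_closure :: "(real^'n) set \<Rightarrow> (real^'n) set" where
  "inf_closure D = {v. v \<noteq> 0 \<and> (\<exists>x::nat \<Rightarrow> real^'n. range x \<subseteq> D \<and>
       filterlim (\<lambda>k. norm (x k)) at_top sequentially \<and>
       (((\<lambda>k. x k /\<^sub>R norm (x k)) \<longlonglongrightarrow> v /\<^sub>R norm v) \<or>
        ((\<lambda>k. x k /\<^sub>R norm (x k)) \<longlonglongrightarrow> - (v /\<^sub>R norm v))))}"

definition tr_dom :: "(real^'n) set set \<Rightarrow> (real^'n) set \<Rightarrow> (real^'n) set" where
  "tr_dom A D = (THE T. inf_face A T \<and> T \<subseteq> inf_closure D \<and>
      (\<forall>T'. inf_face A T' \<and> T' \<subseteq> inf_closure D \<longrightarrow> aff_dim T' \<le> aff_dim T))"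

definition h_fun :: "(real^'n \<Rightarrow> real) \<Rightarrow> (real^'n \<Rightarrow> real) \<Rightarrow> real^'n \<Rightarrow> real" where
  "h_fun f f0 v = lin_part f v / lin_part f0 v"

definition h_dom :: "(real^'n \<Rightarrow> real) \<Rightarrow> (real^'n) set" where
  "h_dom f0 = {v. v \<noteq> 0 \<and> lin_part f0 v \<noteq> 0}"

definition branch_pow ::
  "(real^'n \<Rightarrow> real) \<Rightarrow> complex \<Rightarrow> (real^'n) set \<Rightarrow> (real^'n \<Rightarrow> complex) \<Rightarrow> bool" where
  "branch_pow f \<alpha> D g \<longleftrightarrow> (\<exists>L. continuous_on D L \<and>
      (\<forall>x\<in>D. exp (L x) = complex_of_real (f x) \<and> g x = exp (\<alpha> * L x)))"

definition max_set :: "(real^'n \<Rightarrow> real) \<Rightarrow> (real^'n) set \<Rightarrow> (real^'n) set" where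
  "max_set f D = {x \<in> closure D. \<forall>y\<in>closure D. \<bar>f y\<bar> \<le> \<bar>f x\<bar>}"

definition ext_support ::
  "(real^'n) set set \<Rightarrow> (real^'n \<Rightarrow> real) \<Rightarrow> (real^'n) set \<Rightarrow> (real^'n) set" where
  "ext_support A f D = (THE F. face A F \<and> F \<subseteq> max_set f D \<and>
      (\<forall>F'. face A F' \<and> F' \<subseteq> max_set f D \<longrightarrow> aff_dim F' \<le> aff_dim F))"

definition c_val ::
  "(real^'n) set set \<Rightarrow> (real^'n \<Rightarrow> real) \<Rightarrow> (real^'n \<Rightarrow> complex) \<Rightarrow> (real^'n) set \<Rightarrow> complex" where
  "c_val A f g D = (THE z. \<forall>x\<in>ext_support A f D. (g \<longlongrightarrow> z) (at x within D))"

end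

theory Submission
  imports Defs
begin

text \<open>Orienting every hyperplane of \<open>A\<close> towards the domain \<open>\<Delta>\<close> writes \<open>\<Delta>\<close> as an open polyhedron
  \<open>{x. \<forall>K\<in>A. b K < a K \<bullet> x}\<close> whose closure is the corresponding closed polyhedron. Its points at
  infinity are the lines through its recession cone \<open>R\<close>, and \<open>tr(\<Delta>)\<close> is \<open>C \<union> -C\<close> for the relative
  interior \<open>C\<close> of \<open>R\<close>. Hence \<open>|f|\<close> is bounded on \<open>\<Delta>\<close> iff \<open>f\<^sup>0\<close> vanishes on \<open>R\<close> iff it vanishes on \<open>tr(\<Delta>)\<close>;
  and since \<open>f\<^sub>0\<close> grows on \<open>\<Delta>\<close>, \<open>f\<^sub>0\<^sup>0\<close> is positive on \<open>R - {0}\<close>, so \<open>h\<close> is defined on \<open>tr(\<Delta>)\<close>.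

  If \<open>|f|\<close> is bounded, then \<open>|f| = \<plusminus>f\<close> is affine on the closure and, its linear part being non-positive
  on \<open>R\<close>, attains its maximum at some point \<open>y\<close>. The points of maximum form a face of the closed
  polyhedron, whose relative interior is the external support; for \<open>t > f\<^sub>0 y\<close> the same holds in
  \<open>\<Delta>\<^sub>t\<close> with the same maximum. A branch of \<open>f\<^sup>\<alpha>\<close> is \<open>exp (\<alpha> (ln |f| + w))\<close> for a constant \<open>w\<close>, so both
  values of \<open>c\<close> equal \<open>exp (\<alpha> (ln |f y| + w))\<close>.\<close>

section \<open>Polyhedral cells\<close>

definition closed_cell :: "'i set \<Rightarrow> ('i \<Rightarrow> 'a::real_inner) \<Rightarrow> ('i \<Rightarrow> real) \<Rightarrow> 'a set" where
  "closed_cell I a b = {x. \<forall>i\<in>I. b i \<le> a i \<bullet> x}"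

definition open_cell :: "'i set \<Rightarrow> ('i \<Rightarrow> 'a::real_inner) \<Rightarrow> ('i \<Rightarrow> real) \<Rightarrow> 'a set" where
  "open_cell I a b = {x. \<forall>i\<in>I. b i < a i \<bullet> x}"

lemma closed_cell_eq_INT: "closed_cell I a b = (\<Inter>i\<in>I. {x. b i \<le> a i \<bullet> x})"
  by (auto simp: closed_cell_def)

lemma open_cell_eq_INT: "open_cell I a b = (\<Inter>i\<in>I. {x. b i < a i \<bullet> x})"
  by (auto simp: open_cell_def)

lemma closed_closed_cell: "closed (closed_cell I a b)"
  by (simp add: closed_cell_eq_INT closed_INT closed_halfspace_ge)

lemma convex_closed_cell: "convex (closed_cell I a b)"
  by (simp add: closed_cell_eq_INT convex_INT convex_halfspace_ge)

lemma convex_open_cell: "convex (open_cell I a b)"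
  by (simp add: open_cell_eq_INT convex_INT convex_halfspace_gt)

lemma open_open_cell: "finite I \<Longrightarrow> open (open_cell I a b)"
  by (simp add: open_cell_eq_INT open_INT open_halfspace_gt)

lemma open_cell_subset_closed_cell: "open_cell I a b \<subseteq> closed_cell I a b"
  by (auto simp: open_cell_def closed_cell_def less_imp_le)

lemma open_segment_subset_open_cell:
  assumes "p \<in> open_cell I a b" "x \<in> closed_cell I a b"
  shows "open_segment p x \<subseteq> open_cell I a b"
proof
  fix y assume "y \<in> open_segment p x"
  then obtain u where u: "0 < u" "u < 1" and y: "y = (1 - u) *\<^sub>R p + u *\<^sub>R x"
    by (auto simp: in_segment)
  have "b i < a i \<bullet> y" if "i \<in> I" for i
  proof -
    have "a i \<bullet> y = (1 - u) * (a i \<bullet> p) + u * (a i \<bullet> x)"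
      by (simp add: y inner_add_right)
    moreover have "(1 - u) * b i < (1 - u) * (a i \<bullet> p)" "u * b i \<le> u * (a i \<bullet> x)"
      using assms that u by (auto simp: open_cell_def closed_cell_def)
    ultimately show ?thesis by (simp add: algebra_simps)
  qed
  then show "y \<in> open_cell I a b" by (simp add: open_cell_def)
qed

lemma closure_open_cell:
  fixes a :: "'i \<Rightarrow> 'a::euclidean_space"
  assumes "open_cell I a b \<noteq> {}"
  shows "closure (open_cell I a b) = closed_cell I a b"
proof
  show "closure (open_cell I a b) \<subseteq> closed_cell I a b"
    by (simp add: closure_minimal open_cell_subset_closed_cell closed_closed_cell)
  show "closed_cell I a b \<subseteq> closure (open_cell I a b)"
  proof
    fix x assume x: "x \<in> closed_cell I a b"
    obtain p where p: "p \<in> open_cell I a b" using assms by blast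
    show "x \<in> closure (open_cell I a b)"
    proof (cases "p = x")
      case False
      then have "x \<in> closure (open_segment p x)" by simp
      then show ?thesis
        using closure_mono[OF open_segment_subset_open_cell[OF p x]] by blast
    qed (use p closure_subset in blast)
  qed
qed

lemma ray_in_open_cell:
  assumes "p \<in> open_cell I a b" "u \<in> closed_cell I a (\<lambda>_. 0)" "0 \<le> t"
  shows "p + t *\<^sub>R u \<in> open_cell I a b"
proof -
  have "b i < a i \<bullet> p + t * (a i \<bullet> u)" if "i \<in> I" for i
  proof -
    have "b i < a i \<bullet> p" "0 \<le> a i \<bullet> u"
      using assms(1,2) that by (auto simp: open_cell_def closed_cell_def)
    then show ?thesis using assms(3) mult_nonneg_nonneg[of t "a i \<bullet> u"] by linarith
  qed
  then show ?thesis by (simp add: open_cell_def inner_add_right)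
qed

lemma closed_cell_zero_scaleR_iff:
  "0 < c \<Longrightarrow> c *\<^sub>R u \<in> closed_cell I a (\<lambda>_. 0) \<longleftrightarrow> u \<in> closed_cell I a (\<lambda>_. 0)"
  by (simp add: closed_cell_def zero_le_mult_iff)

lemma ray_escapes:
  fixes p v :: "'a::real_normed_vector"
  assumes "v \<noteq> 0"
  shows "filterlim (\<lambda>k. norm (p + real k *\<^sub>R v)) at_top sequentially"
    and "(\<lambda>k. (p + real k *\<^sub>R v) /\<^sub>R norm (p + real k *\<^sub>R v)) \<longlonglongrightarrow> v /\<^sub>R norm v"
proof -
  have "filterlim (\<lambda>k. norm v * real k) at_top sequentially"
    using assms by (intro filterlim_tendsto_pos_mult_at_top[OF tendsto_const _ filterlim_real_sequentially]) simp
  then have "filterlim (\<lambda>k. - norm p + norm v * real k) at_top sequentially"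
    by (rule filterlim_tendsto_add_at_top[OF tendsto_const])
  moreover have "\<forall>k. - norm p + norm v * real k \<le> norm (p + real k *\<^sub>R v)"
    using norm_diff_ineq[of "real _ *\<^sub>R v" p] by (simp add: add.commute mult.commute)
  ultimately show "filterlim (\<lambda>k. norm (p + real k *\<^sub>R v)) at_top sequentially"
    by (rule filterlim_at_top_mono[OF _ always_eventually])
  have "(\<lambda>k. sgn (v + inverse (real k) *\<^sub>R p)) \<longlonglongrightarrow> sgn (v + 0 *\<^sub>R p)"
    using assms by (intro tendsto_intros tendsto_inverse_0_at_top filterlim_real_sequentially) auto
  moreover have "\<forall>\<^sub>F k in sequentially. sgn (v + inverse (real k) *\<^sub>R p) = sgn (p + real k *\<^sub>R v)"
  proof (rule eventually_sequentiallyI[of 1])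
    fix k :: nat assume "1 \<le> k"
    then have "p + real k *\<^sub>R v = real k *\<^sub>R (v + inverse (real k) *\<^sub>R p)"
      by (simp add: scaleR_add_right)
    then show "sgn (v + inverse (real k) *\<^sub>R p) = sgn (p + real k *\<^sub>R v)"
      using \<open>1 \<le> k\<close> by (simp add: sgn_scaleR)
  qed
  ultimately show "(\<lambda>k. (p + real k *\<^sub>R v) /\<^sub>R norm (p + real k *\<^sub>R v)) \<longlonglongrightarrow> v /\<^sub>R norm v"
    by (simp add: Lim_transform_eventually sgn_div_norm)
qed

lemma normalized_limit_inner_nonneg:
  fixes x :: "nat \<Rightarrow> 'a::real_inner"
  assumes "\<And>k. b \<le> a \<bullet> x k" and inf: "filterlim (\<lambda>k. norm (x k)) at_top sequentially"
    and lim: "(\<lambda>k. x k /\<^sub>R norm (x k)) \<longlonglongrightarrow> u"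
  shows "0 \<le> a \<bullet> u"
proof -
  have "(\<lambda>k. a \<bullet> (x k /\<^sub>R norm (x k))) \<longlonglongrightarrow> a \<bullet> u"
    by (intro tendsto_intros lim)
  moreover have "(\<lambda>k. b / norm (x k)) \<longlonglongrightarrow> 0"
    using tendsto_divide_0[OF tendsto_const filterlim_at_top_imp_at_infinity[OF inf]] .
  moreover have "\<forall>\<^sub>F k in sequentially. b / norm (x k) \<le> a \<bullet> (x k /\<^sub>R norm (x k))"
    using filterlim_at_top_dense[THEN iffD1, OF inf, rule_format, of 0]
  proof (rule eventually_mono)
    fix k assume "0 < norm (x k)"
    then show "b / norm (x k) \<le> a \<bullet> (x k /\<^sub>R norm (x k))"
      using divide_right_mono[OF assms(1)[of k], of "norm (x k)"] by (simp add: divide_inverse_commute)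
  qed
  ultimately show ?thesis by (rule tendsto_le[OF sequentially_bot])
qed

lemma normalized_limit_in_recession_cone:
  assumes "\<And>k. x k \<in> closed_cell I a b" "filterlim (\<lambda>k. norm (x k)) at_top sequentially"
    and "(\<lambda>k. x k /\<^sub>R norm (x k)) \<longlonglongrightarrow> u"
  shows "u \<in> closed_cell I a (\<lambda>_. 0)"
  using normalized_limit_inner_nonneg[OF _ assms(2,3)] assms(1)
  by (fastforce simp: closed_cell_def)

lemma inner_normalized_limit_at_top:
  fixes x :: "nat \<Rightarrow> 'a::real_inner"
  assumes inf: "filterlim (\<lambda>k. norm (x k)) at_top sequentially"
    and lim: "(\<lambda>k. x k /\<^sub>R norm (x k)) \<longlonglongrightarrow> u" and pos: "0 < c \<bullet> u"
  shows "filterlim (\<lambda>k. c \<bullet> x k) at_top sequentially"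
proof -
  have "filterlim (\<lambda>k. (c \<bullet> (x k /\<^sub>R norm (x k))) * norm (x k)) at_top sequentially"
    by (rule filterlim_tendsto_pos_mult_at_top[OF tendsto_inner[OF tendsto_const lim] pos inf])
  moreover have "\<forall>\<^sub>F k in sequentially. (c \<bullet> (x k /\<^sub>R norm (x k))) * norm (x k) = c \<bullet> x k"
    using filterlim_at_top_dense[THEN iffD1, OF inf, rule_format, of 0]
    by (rule eventually_mono) simp
  ultimately show ?thesis by (rule filterlim_mono_eventually[OF _ order_refl order_refl])
qed

lemma unbounded_imp_normalized_convergent:
  fixes S :: "'a::euclidean_space set"
  assumes "\<not> bounded S"
  obtains x u where "\<And>k. x k \<in> S" "filterlim (\<lambda>k. norm (x k)) at_top sequentially"
     "(\<lambda>k. x k /\<^sub>R norm (x k)) \<longlonglongrightarrow> u" "norm u = 1"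
proof -
  have "\<forall>k::nat. \<exists>x\<in>S. real k < norm x" using assms unfolding bounded_iff by (meson not_le)
  then obtain x where x: "\<And>k. x k \<in> S" "\<And>k. real k < norm (x k)" by metis
  then have "x k \<noteq> 0" for k
    using of_nat_0_le_iff[of k] by (metis norm_zero order.strict_trans1 order.irrefl)
  then have "\<forall>k. x k /\<^sub>R norm (x k) \<in> sphere 0 1" by simp
  from seq_compactE[OF compact_imp_seq_compact[OF compact_sphere] this]
  obtain u \<sigma> where u: "u \<in> sphere 0 1" "strict_mono \<sigma>"
    "((\<lambda>k. x k /\<^sub>R norm (x k)) \<circ> \<sigma>) \<longlonglongrightarrow> u" by blast
  have "filterlim (\<lambda>k. norm (x (\<sigma> k))) at_top sequentially"
  proof (rule filterlim_at_top_mono[OF filterlim_real_sequentially always_eventually], rule allI)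
    show "real k \<le> norm (x (\<sigma> k))" for k
      using x(2)[of "\<sigma> k"] seq_suble[OF u(2), of k] by linarith
  qed
  with that[of "x \<circ> \<sigma>"] x(1) u show ?thesis by (simp add: o_def)
qed

lemma recession_cone_nontrivial:
  fixes a :: "'i \<Rightarrow> 'a::euclidean_space"
  assumes "\<not> bounded (open_cell I a b)"
  shows "closed_cell I a (\<lambda>_. 0) \<noteq> {0}"
proof -
  obtain x u where x: "\<And>k. x k \<in> open_cell I a b" "filterlim (\<lambda>k. norm (x k)) at_top sequentially"
    "(\<lambda>k. x k /\<^sub>R norm (x k)) \<longlonglongrightarrow> u" and "norm u = 1"
    using unbounded_imp_normalized_convergent[OF assms] by blast
  then have "u \<in> closed_cell I a (\<lambda>_. 0)"
    using open_cell_subset_closed_cell by (intro normalized_limit_in_recession_cone[OF _ x(2,3)]) blast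
  moreover have "u \<noteq> 0" using \<open>norm u = 1\<close> by auto
  ultimately show ?thesis by blast
qed

lemma growing_recession_pos:
  fixes c :: "'a::real_inner"
  assumes grow: "filterlim (\<lambda>x. c \<bullet> x + d) at_top (inf at_infinity (principal (open_cell I a b)))"
    and p: "p \<in> open_cell I a b" and u: "u \<in> closed_cell I a (\<lambda>_. 0)" "u \<noteq> 0"
  shows "0 < c \<bullet> u"
proof (rule ccontr)
  assume "\<not> 0 < c \<bullet> u"
  then have bound: "c \<bullet> (p + real k *\<^sub>R u) + d \<le> c \<bullet> p + d" for k
    by (simp add: inner_add_right mult_nonneg_nonpos)
  have "filterlim (\<lambda>k. p + real k *\<^sub>R u) (inf at_infinity (principal (open_cell I a b))) sequentially"
    using ray_escapes(1)[OF u(2)] ray_in_open_cell[OF p u(1)]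
    by (simp add: filterlim_inf filterlim_principal filterlim_at_infinity_conv_norm_at_top)
  from filterlim_compose[OF grow this]
  have "\<forall>\<^sub>F k in sequentially. c \<bullet> p + d < c \<bullet> (p + real k *\<^sub>R u) + d"
    unfolding filterlim_at_top_dense by blast
  then obtain k where "c \<bullet> p + d < c \<bullet> (p + real k *\<^sub>R u) + d"
    using eventually_happens'[OF sequentially_bot] by blast
  with bound[of k] show False by simp
qed

lemma closed_cell_shorten_along_recession:
  fixes z l :: "'a::real_inner"
  assumes "finite I" and z: "z \<in> closed_cell I a b" and l: "l \<in> closed_cell I a (\<lambda>_. 0)"
    and zl: "0 < z \<bullet> l" and strict: "\<And>i. i \<in> I \<Longrightarrow> 0 < a i \<bullet> l \<Longrightarrow> b i < a i \<bullet> z"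
  obtains e where "0 < e" "z - e *\<^sub>R l \<in> closed_cell I a b" "norm (z - e *\<^sub>R l) < norm z"
proof -
  have "\<forall>\<^sub>F e in at_right 0. b i \<le> a i \<bullet> (z - e *\<^sub>R l)" if i: "i \<in> I" for i
  proof (cases "0 < a i \<bullet> l")
    case True
    have "((\<lambda>e. a i \<bullet> (z - e *\<^sub>R l)) \<longlongrightarrow> a i \<bullet> (z - 0 *\<^sub>R l)) (at_right 0)"
      by (intro tendsto_intros)
    from order_tendstoD(1)[OF this] strict[OF i True]
    have "\<forall>\<^sub>F e in at_right 0. b i < a i \<bullet> (z - e *\<^sub>R l)" by simp
    then show ?thesis by (rule eventually_mono) simp
  next
    case False
    then have "a i \<bullet> l = 0" using l i by (force simp: closed_cell_def)
    then show ?thesis using z i by (simp add: closed_cell_def inner_diff_right)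
  qed
  then have "\<forall>\<^sub>F e in at_right 0. z - e *\<^sub>R l \<in> closed_cell I a b"
    by (simp add: closed_cell_def eventually_ball_finite_distrib[OF assms(1)])
  moreover have "\<forall>\<^sub>F e in at_right 0. e * (l \<bullet> l) < 2 * (z \<bullet> l)"
    using zl by (intro order_tendstoD(2)[where y = 0] tendsto_mult_left_zero tendsto_ident_at) auto
  moreover have "\<forall>\<^sub>F e::real in at_right 0. 0 < e" by (rule eventually_at_right_less)
  ultimately have "\<forall>\<^sub>F e in at_right 0.
      0 < e \<and> z - e *\<^sub>R l \<in> closed_cell I a b \<and> e * (l \<bullet> l) < 2 * (z \<bullet> l)"
    by eventually_elim blast
  from eventually_happens[OF this] obtain e where
    e: "0 < e" "z - e *\<^sub>R l \<in> closed_cell I a b" "e * (l \<bullet> l) < 2 * (z \<bullet> l)"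
    using trivial_limit_at_right_real by blast
  have "(norm (z - e *\<^sub>R l))\<^sup>2 = (norm z)\<^sup>2 - e * (2 * (z \<bullet> l) - e * (l \<bullet> l))"
    by (simp add: power2_norm_eq_inner inner_diff_left inner_diff_right inner_commute algebra_simps)
  also have "\<dots> < (norm z)\<^sup>2" using e by simp
  finally have "norm (z - e *\<^sub>R l) < norm z" by (simp add: power_less_imp_less_base)
  with e that show ?thesis by blast
qed

text \<open>A minimizer escaping to infinity could be shortened along its limit direction, which lies in
  the recession cone.\<close>

lemma bounded_norm_minimizers:
  fixes c :: "'a::euclidean_space"
  assumes fin: "finite I" and rec: "\<And>u. u \<in> closed_cell I a (\<lambda>_. 0) \<Longrightarrow> c \<bullet> u \<le> 0"
  shows "bounded {x \<in> closed_cell I a b. \<forall>y\<in>closed_cell I a b. c \<bullet> x \<le> c \<bullet> y \<longrightarrow> norm x \<le> norm y}"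
    (is "bounded ?M")
proof (rule ccontr)
  assume "\<not> bounded ?M"
  obtain x l where x: "\<And>k. x k \<in> ?M" and inf: "filterlim (\<lambda>k. norm (x k)) at_top sequentially"
    and lim: "(\<lambda>k. x k /\<^sub>R norm (x k)) \<longlonglongrightarrow> l" and "norm l = 1"
    using unbounded_imp_normalized_convergent[OF \<open>\<not> bounded ?M\<close>] by blast
  then have "0 < l \<bullet> l" by (simp add: power2_norm_eq_inner[symmetric])
  have l: "l \<in> closed_cell I a (\<lambda>_. 0)"
    using x by (intro normalized_limit_in_recession_cone[OF _ inf lim]) blast
  have "\<forall>\<^sub>F k in sequentially. 0 < x k \<bullet> l"
    using inner_normalized_limit_at_top[OF inf lim \<open>0 < l \<bullet> l\<close>]
    by (auto simp: filterlim_at_top_dense inner_commute)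
  moreover have "\<forall>\<^sub>F k in sequentially. \<forall>i\<in>{i\<in>I. 0 < a i \<bullet> l}. b i < a i \<bullet> x k"
  proof (rule eventually_ball_finite, use fin in simp, rule ballI)
    fix i assume "i \<in> {i\<in>I. 0 < a i \<bullet> l}"
    then show "\<forall>\<^sub>F k in sequentially. b i < a i \<bullet> x k"
      using inner_normalized_limit_at_top[OF inf lim] by (simp add: filterlim_at_top_dense)
  qed
  ultimately obtain k where k: "0 < x k \<bullet> l" "\<And>i. i \<in> I \<Longrightarrow> 0 < a i \<bullet> l \<Longrightarrow> b i < a i \<bullet> x k"
    using eventually_happens'[OF sequentially_bot eventually_conj] by blast
  obtain e where e: "0 < e" "x k - e *\<^sub>R l \<in> closed_cell I a b" "norm (x k - e *\<^sub>R l) < norm (x k)"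
    using closed_cell_shorten_along_recession[OF fin _ l k] x by blast
  have "c \<bullet> x k \<le> c \<bullet> (x k - e *\<^sub>R l)"
    using rec[OF l] \<open>0 < e\<close> by (simp add: inner_diff_right mult_nonneg_nonpos)
  then have "norm (x k) \<le> norm (x k - e *\<^sub>R l)" using x[of k] e(2) by blast
  with e(3) show False by simp
qed

lemma linear_attains_max_on_closed_cell:
  fixes c :: "'a::euclidean_space"
  assumes fin: "finite I" and ne: "closed_cell I a b \<noteq> {}"
    and rec: "\<And>u. u \<in> closed_cell I a (\<lambda>_. 0) \<Longrightarrow> c \<bullet> u \<le> 0"
  obtains y where "y \<in> closed_cell I a b" "\<And>x. x \<in> closed_cell I a b \<Longrightarrow> c \<bullet> x \<le> c \<bullet> y"
proof -
  let ?P = "closed_cell I a b"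
  obtain B where B: "\<And>x. x \<in> ?P \<Longrightarrow> (\<forall>y\<in>?P. c \<bullet> x \<le> c \<bullet> y \<longrightarrow> norm x \<le> norm y) \<Longrightarrow> norm x \<le> B"
    using bounded_norm_minimizers[OF fin rec, where b = b] unfolding bounded_iff by blast
  have improve: "\<exists>x'\<in>?P \<inter> cball 0 B. c \<bullet> x \<le> c \<bullet> x'" if x: "x \<in> ?P" for x
  proof -
    have "closed (?P \<inter> {y. c \<bullet> x \<le> c \<bullet> y})"
      by (intro closed_Int closed_closed_cell closed_halfspace_ge)
    with x obtain x' where "x' \<in> ?P \<inter> {y. c \<bullet> x \<le> c \<bullet> y}"
      "\<And>y. y \<in> ?P \<inter> {y. c \<bullet> x \<le> c \<bullet> y} \<Longrightarrow> dist 0 x' \<le> dist 0 y"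
      using distance_attains_inf[of "?P \<inter> {y. c \<bullet> x \<le> c \<bullet> y}" 0] by blast
    then show ?thesis using B[of x'] by (force simp: dist_norm)
  qed
  have "compact (?P \<inter> cball 0 B)"
    by (simp add: compact_Int_closed closed_closed_cell Int_commute)
  moreover have "?P \<inter> cball 0 B \<noteq> {}" using ne improve by blast
  ultimately obtain y where y: "y \<in> ?P \<inter> cball 0 B" "\<forall>x\<in>?P \<inter> cball 0 B. c \<bullet> x \<le> c \<bullet> y"
    using continuous_attains_sup[OF _ _ continuous_on_inner[OF continuous_on_const continuous_on_id]]
    by blast
  have "c \<bullet> x \<le> c \<bullet> y" if "x \<in> ?P" for x
    using improve[OF that] y(2) by (blast intro: order.trans)
  with y(1) that show ?thesis by blast
qed

lemma bounded_abs_affine_on_open_cell_iff: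
  fixes c :: "'a::euclidean_space"
  assumes "finite I" and p: "p \<in> open_cell I a b"
  shows "bounded ((\<lambda>x. \<bar>c \<bullet> x + d\<bar>) ` open_cell I a b) \<longleftrightarrow> (\<forall>u\<in>closed_cell I a (\<lambda>_. 0). c \<bullet> u = 0)"
proof
  assume "bounded ((\<lambda>x. \<bar>c \<bullet> x + d\<bar>) ` open_cell I a b)"
  then obtain B where B: "\<And>x. x \<in> open_cell I a b \<Longrightarrow> \<bar>c \<bullet> x + d\<bar> \<le> B"
    unfolding bounded_real by auto
  show "\<forall>u\<in>closed_cell I a (\<lambda>_. 0). c \<bullet> u = 0"
  proof (rule ballI, rule ccontr)
    fix u assume u: "u \<in> closed_cell I a (\<lambda>_. 0)" and "c \<bullet> u \<noteq> 0"
    then obtain k :: nat where k: "(B + \<bar>c \<bullet> p + d\<bar>) / \<bar>c \<bullet> u\<bar> < real k"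
      using reals_Archimedean2 by blast
    have "\<bar>c \<bullet> (p + real k *\<^sub>R u) + d\<bar> \<le> B" by (rule B[OF ray_in_open_cell[OF p u]]) simp
    moreover have "real k * \<bar>c \<bullet> u\<bar> \<le> \<bar>c \<bullet> (p + real k *\<^sub>R u) + d\<bar> + \<bar>c \<bullet> p + d\<bar>"
      using abs_triangle_ineq4[of "c \<bullet> (p + real k *\<^sub>R u) + d" "c \<bullet> p + d"]
      by (simp add: inner_add_right abs_mult)
    moreover have "B + \<bar>c \<bullet> p + d\<bar> < real k * \<bar>c \<bullet> u\<bar>"
      using k \<open>c \<bullet> u \<noteq> 0\<close> by (simp add: divide_less_eq)
    ultimately show False by linarith
  qed
next
  assume rec: "\<forall>u\<in>closed_cell I a (\<lambda>_. 0). c \<bullet> u = 0"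
  have ne: "closed_cell I a b \<noteq> {}" using p open_cell_subset_closed_cell by blast
  have "c \<bullet> u \<le> 0" "(- c) \<bullet> u \<le> 0" if "u \<in> closed_cell I a (\<lambda>_. 0)" for u
    using rec that by auto
  then obtain y1 y2 where y1: "\<And>x. x \<in> closed_cell I a b \<Longrightarrow> c \<bullet> x \<le> c \<bullet> y1"
    and y2: "\<And>x. x \<in> closed_cell I a b \<Longrightarrow> (- c) \<bullet> x \<le> (- c) \<bullet> y2"
    using linear_attains_max_on_closed_cell[OF assms(1) ne] by metis
  have "\<bar>c \<bullet> x + d\<bar> \<le> \<bar>c \<bullet> y1 + d\<bar> + \<bar>c \<bullet> y2 + d\<bar>" if "x \<in> open_cell I a b" for x
  proof -
    have "x \<in> closed_cell I a b" using that open_cell_subset_closed_cell by blast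
    then show ?thesis using y1[of x] y2[of x] by simp
  qed
  then show "bounded ((\<lambda>x. \<bar>c \<bullet> x + d\<bar>) ` open_cell I a b)"
    unfolding bounded_real by (intro exI[of _ "\<bar>c \<bullet> y1 + d\<bar> + \<bar>c \<bullet> y2 + d\<bar>"]) auto
qed

lemma connected_avoiding_hyperplane_side:
  fixes a :: "'a::euclidean_space"
  assumes "connected S" "\<forall>x\<in>S. a \<bullet> x \<noteq> b" "x0 \<in> S" "b < a \<bullet> x0" "x \<in> S"
  shows "b < a \<bullet> x"
  using connected_ivt_hyperplane[OF assms(1) assms(5) assms(3), of a b] assms(2,4) by force

lemma affine_sign_on_closure:
  fixes c :: "'a::euclidean_space"
  assumes "connected D" "\<forall>x\<in>D. c \<bullet> x + d \<noteq> 0"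
  obtains s :: real where "\<And>x. x \<in> D \<Longrightarrow> 0 < s * (c \<bullet> x + d)"
    "\<And>x. x \<in> closure D \<Longrightarrow> \<bar>c \<bullet> x + d\<bar> = s * (c \<bullet> x + d)"
proof -
  have "\<exists>s. \<bar>s\<bar> = 1 \<and> (\<forall>x\<in>D. 0 < s * (c \<bullet> x + d))"
  proof (cases "D = {}")
    case False
    then obtain x0 where x0: "x0 \<in> D" by blast
    define s where "s = sgn (c \<bullet> x0 + d)"
    have "\<forall>x\<in>D. (s *\<^sub>R c) \<bullet> x \<noteq> - (s * d)" "- (s * d) < (s *\<^sub>R c) \<bullet> x0"
      using assms(2) x0 by (auto simp: s_def sgn_if algebra_simps)
    then have "\<forall>x\<in>D. - (s * d) < (s *\<^sub>R c) \<bullet> x"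
      using connected_avoiding_hyperplane_side[OF assms(1) _ x0] by blast
    then have "0 < s * (c \<bullet> x + d)" if "x \<in> D" for x
      using that distrib_left[of s "c \<bullet> x" d] by auto
    moreover have "\<bar>s\<bar> = 1" using assms(2) x0 by (simp add: s_def abs_sgn_eq)
    ultimately show ?thesis by blast
  qed (intro exI[of _ 1], simp)
  then obtain s where s: "\<bar>s\<bar> = 1" "\<And>x. x \<in> D \<Longrightarrow> 0 < s * (c \<bullet> x + d)" by blast
  have "closure D \<subseteq> {x. - (s * d) \<le> (s *\<^sub>R c) \<bullet> x}"
    using s(2) by (intro closure_minimal closed_halfspace_ge) (force simp: algebra_simps)
  then have "\<bar>c \<bullet> x + d\<bar> = s * (c \<bullet> x + d)" if "x \<in> closure D" for x
    using that s(1) by (auto simp: algebra_simps abs_if split: if_splits)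
  with s(2) show ?thesis by (rule that)
qed

section \<open>Strata and their open faces\<close>

definition stratum :: "'i set \<Rightarrow> ('i \<Rightarrow> 'a::real_inner) \<Rightarrow> ('i \<Rightarrow> real) \<Rightarrow> 'i set \<Rightarrow> 'a set" where
  "stratum I a b S = {x. (\<forall>i\<in>S. a i \<bullet> x = b i) \<and> (\<forall>i\<in>I - S. a i \<bullet> x \<noteq> b i)}"

definition tight_constraints :: "'i set \<Rightarrow> ('i \<Rightarrow> 'a::real_inner) \<Rightarrow> ('i \<Rightarrow> real) \<Rightarrow> 'a set \<Rightarrow> 'i set" where
  "tight_constraints I a b G = {i\<in>I. \<forall>x\<in>G. a i \<bullet> x = b i}"

definition open_face :: "'i set \<Rightarrow> ('i \<Rightarrow> 'a::real_inner) \<Rightarrow> ('i \<Rightarrow> real) \<Rightarrow> 'a set \<Rightarrow> 'a set" where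
  "open_face I a b G = {x. (\<forall>i\<in>tight_constraints I a b G. a i \<bullet> x = b i) \<and>
                          (\<forall>i\<in>I - tight_constraints I a b G. b i < a i \<bullet> x)}"

lemma affine_hyperplanes_Inter: "affine {x. \<forall>i\<in>T. a i \<bullet> x = b i}"
proof -
  have "{x. \<forall>i\<in>T. a i \<bullet> x = b i} = (\<Inter>i\<in>T. {x. a i \<bullet> x = b i})" by auto
  then show ?thesis by (auto intro: affine_hyperplane)
qed

lemma strict_part_in_components:
  fixes X :: "'a::euclidean_space set"
  assumes nz: "\<forall>x\<in>X. \<forall>j\<in>J. a j \<bullet> x \<noteq> b j"
    and C: "C = {x\<in>X. \<forall>j\<in>J. b j < a j \<bullet> x}" and "connected C" "C \<noteq> {}"
  shows "C \<in> components X"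
proof -
  obtain x0 where x0: "x0 \<in> C" using assms(4) by blast
  then have x0X: "x0 \<in> X" using C by blast
  have "connected_component_set X x0 \<subseteq> C"
  proof
    fix y assume y: "y \<in> connected_component_set X x0"
    have "b j < a j \<bullet> y" if "j \<in> J" for j
      using connected_avoiding_hyperplane_side[of "connected_component_set X x0" "a j" "b j" x0 y]
        connected_component_subset[of X x0] nz that x0 C x0X y by auto
    then show "y \<in> C" using C y connected_component_subset by blast
  qed
  moreover have "C \<subseteq> connected_component_set X x0"
    by (rule connected_component_maximal[OF x0 assms(3)]) (use C in blast)
  ultimately show ?thesis using componentsI[OF x0X] by simp
qed

lemma convex_common_strict_point:
  fixes G :: "'a::real_inner set"
  assumes "finite J" "convex G" "G \<noteq> {}"
    and ge: "\<forall>j\<in>J. \<forall>w\<in>G. b j \<le> a j \<bullet> w" and ex: "\<forall>j\<in>J. \<exists>w\<in>G. b j < a j \<bullet> w"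
  shows "\<exists>z\<in>G. \<forall>j\<in>J. b j < a j \<bullet> z"
  using assms(1) ge ex
proof (induction J rule: finite_induct)
  case empty
  then show ?case using assms(3) by auto
next
  case (insert j J)
  then obtain z where z: "z \<in> G" "\<forall>i\<in>J. b i < a i \<bullet> z" by auto
  obtain w where w: "w \<in> G" "b j < a j \<bullet> w" using insert.prems by auto
  define m where "m = (1/2::real) *\<^sub>R z + (1/2::real) *\<^sub>R w"
  have "m \<in> G" unfolding m_def by (rule convexD[OF assms(2) z(1) w(1)]) auto
  moreover have "b i < a i \<bullet> m" if "i \<in> insert j J" for i
  proof -
    have "b i \<le> a i \<bullet> z" "b i \<le> a i \<bullet> w" using insert.prems z(1) w(1) that by auto
    moreover have "b i < a i \<bullet> z \<or> b i < a i \<bullet> w" using that z(2) w(2) by auto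
    ultimately show ?thesis by (auto simp: m_def inner_add_right)
  qed
  ultimately show ?case by blast
qed

lemma open_face_subset_closed_cell: "open_face I a b G \<subseteq> closed_cell I a b"
  by (force simp: open_face_def closed_cell_def tight_constraints_def)

lemma subset_tight_hyperplanes: "G \<subseteq> {x. \<forall>i\<in>tight_constraints I a b G. a i \<bullet> x = b i}"
  by (auto simp: tight_constraints_def)

lemma open_face_meets:
  assumes "finite I" "convex G" "G \<noteq> {}" "G \<subseteq> closed_cell I a b"
  shows "G \<inter> open_face I a b G \<noteq> {}"
proof -
  let ?J = "I - tight_constraints I a b G"
  have ge: "\<forall>j\<in>?J. \<forall>w\<in>G. b j \<le> a j \<bullet> w" using assms(4) by (auto simp: closed_cell_def)
  moreover have "\<forall>j\<in>?J. \<exists>w\<in>G. b j < a j \<bullet> w"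
    using ge by (force simp: tight_constraints_def order.order_iff_strict)
  ultimately obtain z where "z \<in> G" "\<forall>j\<in>?J. b j < a j \<bullet> z"
    using convex_common_strict_point[of ?J G] assms(1-3) by blast
  then show ?thesis using subset_tight_hyperplanes by (fastforce simp: open_face_def)
qed

lemma open_face_subset:
  assumes "finite I" and G: "G face_of closed_cell I a b" "G \<noteq> {}"
  shows "open_face I a b G \<subseteq> G"
proof
  fix w assume w: "w \<in> open_face I a b G"
  obtain z where z: "z \<in> G" "z \<in> open_face I a b G"
    using open_face_meets[OF assms(1) face_of_imp_convex[OF G(1)] G(2) face_of_imp_subset[OF G(1)]]
    by blast
  show "w \<in> G"
  proof (cases "w = z")
    case False
    let ?w' = "\<lambda>t::real. z + t *\<^sub>R (z - w)"
    have "\<forall>\<^sub>F t in at_right 0. b i < a i \<bullet> ?w' t" if "i \<in> I - tight_constraints I a b G" for i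
    proof -
      have "((\<lambda>t. a i \<bullet> ?w' t) \<longlongrightarrow> a i \<bullet> ?w' 0) (at_right 0)" by (intro tendsto_intros)
      then show ?thesis using z(2) that by (intro order_tendstoD(1)) (auto simp: open_face_def)
    qed
    then have "\<forall>\<^sub>F t in at_right 0. \<forall>i\<in>I - tight_constraints I a b G. b i < a i \<bullet> ?w' t"
      by (simp add: eventually_ball_finite_distrib[OF finite_Diff[OF assms(1)]])
    moreover have "\<forall>\<^sub>F t::real in at_right 0. 0 < t" by (rule eventually_at_right_less)
    ultimately have "\<forall>\<^sub>F t in at_right 0. 0 < t \<and> ?w' t \<in> open_face I a b G"
      by eventually_elim (use z(2) w in \<open>auto simp: open_face_def inner_add_right inner_diff_right\<close>)
    from eventually_happens[OF this] obtain t where t: "0 < t" "?w' t \<in> open_face I a b G"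
      using trivial_limit_at_right_real by blast
    have "z \<in> open_segment w (?w' t)"
    proof -
      define u where "u = 1 / (1 + t)"
      have u: "0 < u" "u < 1" "u * (1 + t) = 1" using t(1) by (auto simp: u_def)
      have "(1 - u) *\<^sub>R w + u *\<^sub>R ?w' t = (1 - u * (1 + t)) *\<^sub>R w + (u * (1 + t)) *\<^sub>R z"
        by (simp add: algebra_simps)
      then have "z = (1 - u) *\<^sub>R w + u *\<^sub>R ?w' t" using u(3) by simp
      moreover have "?w' t - w = (1 + t) *\<^sub>R (z - w)" by (simp add: algebra_simps)
      then have "w \<noteq> ?w' t" using False t(1) by auto
      ultimately show ?thesis using u by (auto simp: in_segment)
    qed
    then show ?thesis
      using face_ofD[OF G(1)] z(1) w t(2) open_face_subset_closed_cell by blast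
  qed (use z in simp)
qed

lemma open_face_eq_Int:
  "open_face I a b G = {x. \<forall>i\<in>tight_constraints I a b G. a i \<bullet> x = b i} \<inter>
     open_cell (I - tight_constraints I a b G) a b"
  by (auto simp: open_face_def open_cell_def)

lemma convex_open_face: "convex (open_face I a b G)"
  unfolding open_face_eq_Int
  by (intro convex_Int affine_imp_convex[OF affine_hyperplanes_Inter] convex_open_cell)

lemma open_face_in_components:
  fixes a :: "'i \<Rightarrow> 'a::euclidean_space"
  assumes "open_face I a b G \<noteq> {}"
  shows "open_face I a b G \<in> components (stratum I a b (tight_constraints I a b G))"
proof (rule strict_part_in_components[OF _ _ convex_connected[OF convex_open_face] assms])
  show "\<forall>x\<in>stratum I a b (tight_constraints I a b G). \<forall>j\<in>I - tight_constraints I a b G. a j \<bullet> x \<noteq> b j"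
    by (simp add: stratum_def)
  show "open_face I a b G = {x \<in> stratum I a b (tight_constraints I a b G).
          \<forall>j\<in>I - tight_constraints I a b G. b j < a j \<bullet> x}"
    unfolding open_face_def stratum_def by auto (metis DiffI less_irrefl)
qed

lemma affine_hull_open_face:
  fixes a :: "'i \<Rightarrow> 'a::euclidean_space"
  assumes "finite I" "open_face I a b G \<noteq> {}"
  shows "affine hull (open_face I a b G) = {x. \<forall>i\<in>tight_constraints I a b G. a i \<bullet> x = b i}"
    (is "_ = ?L")
proof (rule affine_dim_equal)
  have "openin (top_of_set ?L) (open_face I a b G)"
    unfolding open_face_eq_Int using assms(1) by (intro openin_open_Int open_open_cell) simp
  then have "aff_dim (open_face I a b G) = aff_dim ?L"
    using aff_dim_openin[OF _ affine_hyperplanes_Inter assms(2)] by blast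
  then show "aff_dim (affine hull open_face I a b G) = aff_dim ?L" by simp
  show "affine hull (open_face I a b G) \<subseteq> ?L"
    by (intro hull_minimal affine_hyperplanes_Inter) (auto simp: open_face_def)
qed (simp_all add: affine_hyperplanes_Inter assms(2))

lemma aff_dim_open_face:
  fixes a :: "'i \<Rightarrow> 'a::euclidean_space"
  assumes "finite I" "open_face I a b G \<noteq> {}"
  shows "aff_dim (open_face I a b G) = aff_dim {x. \<forall>i\<in>tight_constraints I a b G. a i \<bullet> x = b i}"
  using aff_dim_affine_hull[of "open_face I a b G"] unfolding affine_hull_open_face[OF assms]
  by (rule sym)

lemma aff_dim_le_open_face:
  fixes a :: "'i \<Rightarrow> 'a::euclidean_space"
  assumes "finite I" "open_face I a b G \<noteq> {}" "F \<subseteq> G"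
  shows "aff_dim F \<le> aff_dim (open_face I a b G)"
  using aff_dim_subset[OF order.trans[OF assms(3) subset_tight_hyperplanes]]
  by (simp add: aff_dim_open_face[OF assms(1,2)])

text \<open>The dimension may be witnessed by a superset \<open>E\<close> of the component \<open>F\<close>, as is needed for the
  symmetrised faces \<open>C \<union> -C\<close> at infinity.\<close>

lemma stratum_index_eq_tight_constraints:
  fixes a :: "'i \<Rightarrow> 'a::euclidean_space"
  assumes "S \<subseteq> I" "F \<subseteq> stratum I a b S" "F \<noteq> {}" "F \<subseteq> G"
    and E: "F \<subseteq> E" "E \<subseteq> {x. \<forall>i\<in>S \<union> tight_constraints I a b G. a i \<bullet> x = b i}"
      "aff_dim {x. \<forall>i\<in>tight_constraints I a b G. a i \<bullet> x = b i} \<le> aff_dim E"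
  shows "S = tight_constraints I a b G"
proof
  let ?T = "tight_constraints I a b G"
  let ?L = "{x. \<forall>i\<in>?T. a i \<bullet> x = b i}"
  have EL: "E \<subseteq> ?L" using E(2) by blast
  have "aff_dim (affine hull E) = aff_dim ?L"
    using E(3) aff_dim_subset[OF EL] by simp
  then have "affine hull E = ?L"
    using assms(3) E(1) by (intro affine_dim_equal[OF affine_affine_hull affine_hyperplanes_Inter]
        hull_minimal[OF EL] affine_hyperplanes_Inter) auto
  moreover have "affine hull E \<subseteq> {x. \<forall>i\<in>S. a i \<bullet> x = b i}"
    using E(2) by (intro hull_minimal affine_hyperplanes_Inter) auto
  ultimately have "?L \<subseteq> {x. \<forall>i\<in>S. a i \<bullet> x = b i}" by simp
  then show "S \<subseteq> ?T" using assms(1) subset_tight_hyperplanes[of G I a b]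
    by (auto simp: tight_constraints_def)
  obtain v where v: "v \<in> F" using assms(3) by blast
  then have "a i \<bullet> v = b i" if "i \<in> ?T" for i using assms(4) that by (auto simp: tight_constraints_def)
  moreover have "a i \<bullet> v \<noteq> b i" if "i \<in> I - S" for i using assms(2) v that by (auto simp: stratum_def)
  ultimately show "?T \<subseteq> S" by (auto simp: tight_constraints_def)
qed

lemma open_face_unique:
  fixes a :: "'i \<Rightarrow> 'a::euclidean_space"
  assumes "G \<subseteq> closed_cell I a b" "open_face I a b G \<noteq> {}"
    and S: "S \<subseteq> I" "F \<in> components (stratum I a b S)" and "F \<subseteq> G"
    and E: "F \<subseteq> E" "E \<subseteq> {x. \<forall>i\<in>S \<union> tight_constraints I a b G. a i \<bullet> x = b i}"
      "aff_dim {x. \<forall>i\<in>tight_constraints I a b G. a i \<bullet> x = b i} \<le> aff_dim E"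
  shows "F = open_face I a b G"
proof -
  have Fne: "F \<noteq> {}" using S(2) by (rule in_components_nonempty)
  have Fstr: "F \<subseteq> stratum I a b S" using S(2) by (rule in_components_subset)
  have ST: "S = tight_constraints I a b G"
    by (rule stratum_index_eq_tight_constraints[OF S(1) Fstr Fne \<open>F \<subseteq> G\<close> E])
  have "x \<in> open_face I a b G" if x: "x \<in> F" for x
  proof -
    have "b i < a i \<bullet> x" if "i \<in> I - tight_constraints I a b G" for i
    proof -
      have "b i \<le> a i \<bullet> x" using x assms(1,5) that by (auto simp: closed_cell_def)
      moreover have "a i \<bullet> x \<noteq> b i" using x Fstr that ST by (auto simp: stratum_def)
      ultimately show ?thesis by simp
    qed
    moreover have "x \<in> G" using x \<open>F \<subseteq> G\<close> by blast
    ultimately show ?thesis by (auto simp: open_face_def tight_constraints_def)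
  qed
  then have "F \<subseteq> open_face I a b G" by blast
  then show ?thesis
    using components_eq[OF S(2)[unfolded ST] open_face_in_components[OF assms(2)]] Fne by blast
qed

lemma the_max_aff_dim_eqI:
  assumes "P F0" "Q F0" "\<And>F. P F \<Longrightarrow> Q F \<Longrightarrow> aff_dim F \<le> aff_dim F0"
    and "\<And>F. P F \<Longrightarrow> Q F \<Longrightarrow> aff_dim F0 \<le> aff_dim F \<Longrightarrow> F = F0"
  shows "(THE F. P F \<and> Q F \<and> (\<forall>F'. P F' \<and> Q F' \<longrightarrow> aff_dim F' \<le> aff_dim F)) = F0"
  using assms by (intro the_equality) blast+

lemma the_max_dim_stratum_component:
  fixes a :: "'i \<Rightarrow> 'a::euclidean_space"
  assumes "finite I" and G: "G face_of closed_cell I a b" "G \<noteq> {}"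
  shows "(THE F. (\<exists>S\<subseteq>I. F \<in> components (stratum I a b S)) \<and> F \<subseteq> G \<and>
           (\<forall>F'. (\<exists>S\<subseteq>I. F' \<in> components (stratum I a b S)) \<and> F' \<subseteq> G \<longrightarrow> aff_dim F' \<le> aff_dim F))
         = open_face I a b G"
proof (rule the_max_aff_dim_eqI)
  have ne: "open_face I a b G \<noteq> {}"
    using open_face_meets[OF assms(1) face_of_imp_convex[OF G(1)] G(2) face_of_imp_subset[OF G(1)]]
    by blast
  show "\<exists>S\<subseteq>I. open_face I a b G \<in> components (stratum I a b S)"
  proof (intro exI conjI)
    show "tight_constraints I a b G \<subseteq> I" by (auto simp: tight_constraints_def)
  qed (rule open_face_in_components[OF ne])
  show "open_face I a b G \<subseteq> G" by (rule open_face_subset[OF assms])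
  show "aff_dim F \<le> aff_dim (open_face I a b G)" if "F \<subseteq> G" for F
    by (rule aff_dim_le_open_face[OF assms(1) ne that])
  show "F = open_face I a b G"
    if F: "\<exists>S\<subseteq>I. F \<in> components (stratum I a b S)" "F \<subseteq> G"
      "aff_dim (open_face I a b G) \<le> aff_dim F" for F
  proof -
    obtain S where S: "S \<subseteq> I" "F \<in> components (stratum I a b S)" using F(1) by blast
    have "F \<subseteq> {x. \<forall>i\<in>S. a i \<bullet> x = b i}"
      using in_components_subset[OF S(2)] by (auto simp: stratum_def)
    moreover have "F \<subseteq> {x. \<forall>i\<in>tight_constraints I a b G. a i \<bullet> x = b i}"
      using F(2) subset_tight_hyperplanes by (rule order.trans)
    ultimately have "F \<subseteq> {x. \<forall>i\<in>S \<union> tight_constraints I a b G. a i \<bullet> x = b i}" by blast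
    from open_face_unique[OF face_of_imp_subset[OF G(1)] ne S F(2) order_refl this]
    show ?thesis using F(3) by (simp add: aff_dim_open_face[OF assms(1) ne])
  qed
qed

lemma mem_uminus_image: "x \<in> uminus ` S \<longleftrightarrow> - (x::'a::ab_group_add) \<in> S"
proof
  assume "- x \<in> S"
  then have "- (- x) \<in> uminus ` S" by (rule imageI)
  then show "x \<in> uminus ` S" by simp
qed auto

lemma stratum_uminus: "stratum I (\<lambda>i. - a i) (\<lambda>_. 0) S = stratum I a (\<lambda>_. 0) S"
  by (simp add: stratum_def)

lemma closed_cell_uminus: "closed_cell I (\<lambda>i. - a i) (\<lambda>_. 0) = uminus ` closed_cell I a (\<lambda>_. 0)"
  by (auto simp: closed_cell_def mem_uminus_image)

lemma tight_constraints_uminus: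
  "tight_constraints I (\<lambda>i. - a i) (\<lambda>_. 0) (uminus ` G) = tight_constraints I a (\<lambda>_. 0) G"
  by (auto simp: tight_constraints_def)

lemma open_face_uminus:
  "open_face I (\<lambda>i. - a i) (\<lambda>_. 0) (uminus ` G) = uminus ` open_face I a (\<lambda>_. 0) G"
  by (auto simp: open_face_def tight_constraints_uminus mem_uminus_image)

lemma central_open_face_unique:
  fixes a :: "'i \<Rightarrow> 'a::euclidean_space"
  assumes "G \<subseteq> closed_cell I a (\<lambda>_. 0)" "open_face I a (\<lambda>_. 0) G \<noteq> {}"
    and S: "S \<subseteq> I" "C \<in> components (stratum I a (\<lambda>_. 0) S)" and "C \<subseteq> G"
    and L: "C \<union> uminus ` C \<subseteq> {x. \<forall>i\<in>tight_constraints I a (\<lambda>_. 0) G. a i \<bullet> x = 0}"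
      "aff_dim {x. \<forall>i\<in>tight_constraints I a (\<lambda>_. 0) G. a i \<bullet> x = 0} \<le> aff_dim (C \<union> uminus ` C)"
  shows "C = open_face I a (\<lambda>_. 0) G"
proof (rule open_face_unique[OF assms(1,2) S \<open>C \<subseteq> G\<close> _ _ L(2)])
  have "C \<subseteq> {x. \<forall>i\<in>S. a i \<bullet> x = 0}" using in_components_subset[OF S(2)] by (auto simp: stratum_def)
  then have "C \<union> uminus ` C \<subseteq> {x. \<forall>i\<in>S. a i \<bullet> x = 0}" by auto
  with L(1) show "C \<union> uminus ` C \<subseteq> {x. \<forall>i\<in>S \<union> tight_constraints I a (\<lambda>_. 0) G. a i \<bullet> x = 0}"
    by blast
qed simp

section \<open>Arrangements and their domains\<close>

lemma lin_hyp_hyperplane: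
  fixes a :: "real^'n"
  assumes "a \<noteq> 0"
  shows "lin_hyp {x. a \<bullet> x = b} = {v. a \<bullet> v = 0}"
proof
  show "lin_hyp {x. a \<bullet> x = b} \<subseteq> {v. a \<bullet> v = 0}"
    by (auto simp: lin_hyp_def inner_diff_right)
  show "{v. a \<bullet> v = 0} \<subseteq> lin_hyp {x. a \<bullet> x = b}"
  proof
    fix v assume v: "v \<in> {v. a \<bullet> v = 0}"
    define p where "p = (b / (a \<bullet> a)) *\<^sub>R a"
    have p: "a \<bullet> p = b" using assms by (simp add: p_def)
    moreover have "a \<bullet> (v + p) = b" using v p by (simp add: inner_add_right)
    moreover have "v = (v + p) - p" by simp
    ultimately show "v \<in> lin_hyp {x. a \<bullet> x = b}" unfolding lin_hyp_def by blast
  qed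
qed

lemma tr_hyp_affine_zero_set:
  fixes c :: "real^'n"
  assumes "c \<noteq> 0"
  shows "tr_hyp {x. c \<bullet> x + d = 0} = {v. c \<bullet> v = 0} - {0}"
proof -
  have "{x. c \<bullet> x + d = 0} = {x. c \<bullet> x = - d}" by (auto simp: eq_neg_iff_add_eq_0)
  then show ?thesis by (simp add: tr_hyp_def lin_hyp_hyperplane[OF assms])
qed

lemma lin_part_affine: "lin_part (\<lambda>x. c \<bullet> x + d) v = c \<bullet> v"
  by (simp add: lin_part_def)

lemma subset_zero_set_iff_h_fun_zero:
  assumes "\<forall>v\<in>T. v \<noteq> 0 \<and> lin_part f0 v \<noteq> 0"
  shows "T \<subseteq> {v. lin_part f v = 0} - {0} \<longleftrightarrow> T \<subseteq> h_dom f0 \<and> (\<forall>v\<in>T. h_fun f f0 v = 0)"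
  using assms by (auto simp: h_dom_def h_fun_def)

text \<open>Rewriting with an equation \<open>K = {x. a K \<bullet> x = b K}\<close> loops, hence this detour.\<close>

lemma mem_hyperplane_iff: "K = {x. a \<bullet> x = b} \<Longrightarrow> x \<in> K \<longleftrightarrow> a \<bullet> x = b"
  by simp

lemma hyperplane_oriented_towards:
  fixes K :: "(real^'n) set"
  assumes "is_hyperplane K" "connected D" "D \<noteq> {}" "D \<inter> K = {}"
  obtains a b where "a \<noteq> 0" "K = {x. a \<bullet> x = b}" "\<And>x. x \<in> D \<Longrightarrow> b < a \<bullet> x"
proof -
  obtain a b where ab: "a \<noteq> 0" "K = {x. a \<bullet> x = b}"
    using assms(1) unfolding is_hyperplane_def by blast
  obtain x0 where x0: "x0 \<in> D" using assms(3) by blast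
  have nz: "\<forall>x\<in>D. a \<bullet> x \<noteq> b" "\<forall>x\<in>D. (- a) \<bullet> x \<noteq> - b" using assms(4) ab by auto
  show ?thesis
  proof (cases "b < a \<bullet> x0")
    case True
    then show ?thesis
      using that[OF ab] connected_avoiding_hyperplane_side[OF assms(2) nz(1) x0] by blast
  next
    case False
    then have "- b < (- a) \<bullet> x0" using nz(1) x0 by force
    moreover have "K = {x. (- a) \<bullet> x = - b}" using ab by auto
    ultimately show ?thesis using ab(1) that[of "- a" "- b"]
        connected_avoiding_hyperplane_side[OF assms(2) nz(2) x0] by auto
  qed
qed

lemma inf_closure_open_cell:
  fixes a :: "'i \<Rightarrow> real^'n"
  assumes p: "p \<in> open_cell I a b"
  shows "inf_closure (open_cell I a b) =
    {v. v \<noteq> 0 \<and> (v \<in> closed_cell I a (\<lambda>_. 0) \<or> - v \<in> closed_cell I a (\<lambda>_. 0))}"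
proof (intro equalityI subsetI)
  fix v assume "v \<in> inf_closure (open_cell I a b)"
  then obtain x where v: "v \<noteq> 0" and x: "\<And>k. x k \<in> closed_cell I a b"
    and inf: "filterlim (\<lambda>k. norm (x k)) at_top sequentially"
    and "(\<lambda>k. x k /\<^sub>R norm (x k)) \<longlonglongrightarrow> inverse (norm v) *\<^sub>R v \<or>
         (\<lambda>k. x k /\<^sub>R norm (x k)) \<longlonglongrightarrow> inverse (norm v) *\<^sub>R (- v)"
    unfolding inf_closure_def using open_cell_subset_closed_cell by fastforce
  then have "inverse (norm v) *\<^sub>R v \<in> closed_cell I a (\<lambda>_. 0) \<or>
      inverse (norm v) *\<^sub>R (- v) \<in> closed_cell I a (\<lambda>_. 0)"
    using normalized_limit_in_recession_cone[OF x inf] by blast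
  then show "v \<in> {v. v \<noteq> 0 \<and> (v \<in> closed_cell I a (\<lambda>_. 0) \<or> - v \<in> closed_cell I a (\<lambda>_. 0))}"
    using v closed_cell_zero_scaleR_iff[of "inverse (norm v)" v I a]
      closed_cell_zero_scaleR_iff[of "inverse (norm v)" "- v" I a] by simp
next
  have ray: "v \<in> inf_closure (open_cell I a b)"
    if "u \<in> closed_cell I a (\<lambda>_. 0)" "u \<noteq> 0" "u = v \<or> u = - v" for u v
  proof -
    have "range (\<lambda>k. p + real k *\<^sub>R u) \<subseteq> open_cell I a b"
      using ray_in_open_cell[OF p that(1)] by auto
    moreover have "v \<noteq> 0" using that(2,3) by auto
    moreover have "(\<lambda>k. (p + real k *\<^sub>R u) /\<^sub>R norm (p + real k *\<^sub>R u)) \<longlonglongrightarrow> v /\<^sub>R norm v \<or>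
        (\<lambda>k. (p + real k *\<^sub>R u) /\<^sub>R norm (p + real k *\<^sub>R u)) \<longlonglongrightarrow> - (v /\<^sub>R norm v)"
      using ray_escapes(2)[OF that(2), of p] that(3) by auto
    ultimately show ?thesis
      using ray_escapes(1)[OF that(2), of p] unfolding inf_closure_def by blast
  qed
  fix v assume "v \<in> {v. v \<noteq> 0 \<and> (v \<in> closed_cell I a (\<lambda>_. 0) \<or> - v \<in> closed_cell I a (\<lambda>_. 0))}"
  then show "v \<in> inf_closure (open_cell I a b)" using ray[of v v] ray[of "- v" v] by auto
qed

lemma eventually_level_set_notin:
  fixes c :: "'a::real_inner"
  assumes "finite A" "c \<noteq> 0"
  shows "\<forall>\<^sub>F t in at_top. {x. c \<bullet> x + d = t} \<notin> A"
proof -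
  let ?B = "{t. {x. c \<bullet> x + d = t} \<in> A}"
  have pt: "((t - d) / (c \<bullet> c)) *\<^sub>R c \<in> {x. c \<bullet> x + d = t}" for t using assms(2) by simp
  have "t = t'" if "{x. c \<bullet> x + d = t} = {x. c \<bullet> x + d = t'}" for t t'
    using pt[of t] assms(2) unfolding that by simp
  then have "inj_on (\<lambda>t. {x. c \<bullet> x + d = t}) ?B" by (intro inj_onI)
  moreover have "finite ((\<lambda>t. {x. c \<bullet> x + d = t}) ` ?B)" by (rule finite_subset[OF _ assms(1)]) auto
  ultimately have "finite ?B" using finite_imageD by blast
  have "\<forall>\<^sub>F t in at_top. Max (insert 0 ?B) < t" by (rule eventually_gt_at_top)
  then show ?thesis by (rule eventually_mono) (use \<open>finite ?B\<close> in \<open>auto simp: not_le\<close>)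
qed

lemma branch_pow_eq_exp_ln_abs:
  fixes f :: "real^'n \<Rightarrow> real"
  assumes "connected D" "continuous_on D f" "\<forall>x\<in>D. f x \<noteq> 0" "branch_pow f \<alpha> D g"
  obtains w where "\<And>x. x \<in> D \<Longrightarrow> g x = exp (\<alpha> * (complex_of_real (ln \<bar>f x\<bar>) + w))"
proof -
  obtain L where L: "continuous_on D L" "\<And>x. x \<in> D \<Longrightarrow> exp (L x) = complex_of_real (f x)"
    "\<And>x. x \<in> D \<Longrightarrow> g x = exp (\<alpha> * L x)"
    using assms(4) unfolding branch_pow_def by blast
  define \<phi> where "\<phi> x = L x - complex_of_real (ln \<bar>f x\<bar>)" for x
  have exp2: "exp (2 * \<phi> x) = 1" if "x \<in> D" for x
  proof -
    have "exp (\<phi> x) = complex_of_real (f x / \<bar>f x\<bar>)"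
      using L(2)[OF that] assms(3) that by (simp add: \<phi>_def exp_diff exp_of_real)
    moreover have "(f x / \<bar>f x\<bar>)\<^sup>2 = 1" using assms(3) that by (simp add: power_divide)
    ultimately show ?thesis
      using assms(3) that by (simp add: exp_double power2_eq_square flip: of_real_mult)
  qed
  have "\<phi> constant_on D"
    \<comment> \<open>\<open>\<phi>\<close> takes values in the discrete set \<open>\<pi> i \<int>\<close> and \<open>D\<close> is connected\<close>
  proof (rule continuous_discrete_range_constant[OF assms(1)])
    show "continuous_on D \<phi>"
      unfolding \<phi>_def using assms(2,3)
      by (intro continuous_intros L(1) continuous_on_of_real continuous_on_ln continuous_on_rabs) auto
    show "\<exists>e>0. \<forall>y. y \<in> D \<and> \<phi> y \<noteq> \<phi> x \<longrightarrow> e \<le> norm (\<phi> y - \<phi> x)" if x: "x \<in> D" for x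
    proof (intro exI[of _ pi] conjI allI impI)
      fix y assume y: "y \<in> D \<and> \<phi> y \<noteq> \<phi> x"
      then obtain n :: int where n: "2 * \<phi> y = 2 * \<phi> x + of_int (2 * n) * pi * \<i>"
        using exp2[OF x] exp2[of y] exp_eq by metis
      then have "2 * (\<phi> y - \<phi> x) = 2 * (of_int n * pi * \<i>)" by (simp add: algebra_simps)
      then have "\<phi> y - \<phi> x = of_int n * pi * \<i>" by (simp only: mult_cancel_left) simp
      moreover have "n \<noteq> 0" using y n by auto
      ultimately show "pi \<le> norm (\<phi> y - \<phi> x)" by (simp add: norm_mult)
    qed simp
  qed
  then obtain w where "\<And>x. x \<in> D \<Longrightarrow> \<phi> x = w" unfolding constant_on_def by blast
  with L(3) that show ?thesis by (simp add: \<phi>_def algebra_simps)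
qed

lemma c_val_eq:
  fixes f :: "real^'n \<Rightarrow> real"
  assumes "open D" "\<And>x. isCont f x"
    and E: "ext_support A f D \<noteq> {}" "ext_support A f D \<subseteq> closure D" "\<forall>x\<in>ext_support A f D. \<bar>f x\<bar> = M"
    and "0 < M" and g: "\<And>x. x \<in> D \<Longrightarrow> g x = exp (\<alpha> * (complex_of_real (ln \<bar>f x\<bar>) + w))"
  shows "c_val A f g D = exp (\<alpha> * (complex_of_real (ln M) + w))"
  unfolding c_val_def
proof (rule the_equality)
  let ?G = "\<lambda>x. exp (\<alpha> * (complex_of_real (ln \<bar>f x\<bar>) + w))"
  show lim: "\<forall>x\<in>ext_support A f D. (g \<longlongrightarrow> exp (\<alpha> * (complex_of_real (ln M) + w))) (at x within D)"
  proof
    fix x0 assume x0: "x0 \<in> ext_support A f D"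
    then have "isCont ?G x0" using E(3) \<open>0 < M\<close> assms(2)
      by (intro continuous_intros) auto
    then have "(?G \<longlongrightarrow> exp (\<alpha> * (complex_of_real (ln M) + w))) (at x0 within D)"
      using E(3) x0 by (auto simp: isCont_def intro: tendsto_within_subset)
    then show "(g \<longlongrightarrow> exp (\<alpha> * (complex_of_real (ln M) + w))) (at x0 within D)"
      by (rule Lim_transform_within[OF _ zero_less_one]) (simp add: g)
  qed
  fix z assume z: "\<forall>x\<in>ext_support A f D. (g \<longlongrightarrow> z) (at x within D)"
  obtain x0 where x0: "x0 \<in> ext_support A f D" using E(1) by blast
  have "x0 islimpt D"
  proof (cases "x0 \<in> D")
    case True
    then show ?thesis using \<open>open D\<close> by (intro interior_limit_point) (simp add: interior_open)
  qed (use x0 E(2) in \<open>auto simp: closure_def\<close>)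
  then have "at x0 within D \<noteq> bot" by (simp add: trivial_limit_within)
  with z lim x0 show "z = exp (\<alpha> * (complex_of_real (ln M) + w))" by (meson tendsto_unique)
qed

locale oriented_arrangement =
  fixes A :: "(real^'n) set set" and a :: "(real^'n) set \<Rightarrow> real^'n" and b :: "(real^'n) set \<Rightarrow> real"
  assumes finite_arrangement: "finite A"
    and normal_nonzero: "K \<in> A \<Longrightarrow> a K \<noteq> 0"
    and hyperplane_eq: "K \<in> A \<Longrightarrow> K = {x. a K \<bullet> x = b K}"
begin

lemma mem_hyperplane: "K \<in> A \<Longrightarrow> x \<in> K \<longleftrightarrow> a K \<bullet> x = b K"
  by (rule mem_hyperplane_iff[OF hyperplane_eq])

lemma lin_hyp_eq:
  assumes "K \<in> A"
  shows "lin_hyp K = {v. a K \<bullet> v = 0}"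
proof -
  have "lin_hyp K = lin_hyp {x. a K \<bullet> x = b K}" using hyperplane_eq[OF assms] by (rule arg_cong)
  also have "\<dots> = {v. a K \<bullet> v = 0}" by (rule lin_hyp_hyperplane[OF normal_nonzero[OF assms]])
  finally show ?thesis .
qed

lemma not_mem_hyperplane_open_cell: "K \<in> A \<Longrightarrow> x \<in> open_cell A a b \<Longrightarrow> x \<notin> K"
  by (auto simp: open_cell_def mem_hyperplane)

lemma zero_set_normal_nonzero:
  assumes "{x. c \<bullet> x + d = 0} \<in> A" "p \<in> open_cell A a b"
  shows "c \<noteq> 0"
proof
  assume "c = 0"
  let ?K = "{x. c \<bullet> x + d = 0}"
  have "a ?K \<bullet> ((b ?K / (a ?K \<bullet> a ?K)) *\<^sub>R a ?K) = b ?K"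
    using normal_nonzero[OF assms(1)] by simp
  then have "?K \<noteq> {}" using mem_hyperplane[OF assms(1)] by blast
  then have "p \<in> ?K" using \<open>c = 0\<close> by auto
  with not_mem_hyperplane_open_cell[OF assms] show False by contradiction
qed

lemma face_iff_stratum_component: "face A F \<longleftrightarrow> (\<exists>S\<subseteq>A. F \<in> components (stratum A a b S))"
proof -
  have "\<Inter>S - \<Union>(A - S) = stratum A a b S" if "S \<subseteq> A" for S
    using that by (auto simp: stratum_def mem_hyperplane subset_iff)
  then show ?thesis unfolding face_def by auto
qed

lemma the_max_dim_face:
  assumes "G face_of closed_cell A a b" "G \<noteq> {}"
  shows "(THE F. face A F \<and> F \<subseteq> G \<and> (\<forall>F'. face A F' \<and> F' \<subseteq> G \<longrightarrow> aff_dim F' \<le> aff_dim F))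
    = open_face A a b G"
  unfolding face_iff_stratum_component
  by (rule the_max_dim_stratum_component[OF finite_arrangement assms])

lemma lin_strata_eq:
  assumes "S \<subseteq> lin_hyp ` A"
  shows "\<Inter>S - \<Union>(lin_hyp ` A - S) = stratum A a (\<lambda>_. 0) {K\<in>A. lin_hyp K \<in> S}"
proof (intro set_eqI)
  fix x
  have "x \<in> \<Inter>S \<longleftrightarrow> (\<forall>K\<in>{K\<in>A. lin_hyp K \<in> S}. a K \<bullet> x = 0)"
    using assms by (auto simp: lin_hyp_eq)
  moreover have "x \<notin> \<Union>(lin_hyp ` A - S) \<longleftrightarrow> (\<forall>K\<in>A - {K\<in>A. lin_hyp K \<in> S}. a K \<bullet> x \<noteq> 0)"
    by (auto simp: lin_hyp_eq)
  ultimately show "x \<in> \<Inter>S - \<Union>(lin_hyp ` A - S) \<longleftrightarrow> x \<in> stratum A a (\<lambda>_. 0) {K\<in>A. lin_hyp K \<in> S}"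
    by (simp add: stratum_def)
qed

lemma insert_hyperplane:
  assumes "c \<noteq> 0" "{x. c \<bullet> x = e} \<notin> A"
  defines "K \<equiv> {x. c \<bullet> x = e}"
  shows "oriented_arrangement (insert K A) (a(K := c)) (b(K := e))"
    and "open_cell (insert K A) (a(K := c)) (b(K := e)) = open_cell A a b \<inter> {x. e < c \<bullet> x}"
    and "closed_cell (insert K A) (a(K := c)) (b(K := e)) = closed_cell A a b \<inter> {x. e \<le> c \<bullet> x}"
proof -
  have K: "K \<notin> A" using assms(2) by (simp add: K_def)
  show "oriented_arrangement (insert K A) (a(K := c)) (b(K := e))"
    using finite_arrangement normal_nonzero hyperplane_eq assms(1) K
    by unfold_locales (auto simp: K_def)
  show "open_cell (insert K A) (a(K := c)) (b(K := e)) = open_cell A a b \<inter> {x. e < c \<bullet> x}"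
    using K by (auto simp: open_cell_def)
  show "closed_cell (insert K A) (a(K := c)) (b(K := e)) = closed_cell A a b \<inter> {x. e \<le> c \<bullet> x}"
    using K by (auto simp: closed_cell_def)
qed

abbreviation rec_cone :: "(real^'n) set" where
  "rec_cone \<equiv> closed_cell A a (\<lambda>_. 0)"

abbreviation rec_face :: "(real^'n) set" where
  "rec_face \<equiv> open_face A a (\<lambda>_. 0) rec_cone"

lemma rec_cone_face_of_self: "rec_cone face_of rec_cone"
  by (rule face_of_refl[OF convex_closed_cell])

lemma rec_face_nonempty: "rec_face \<noteq> {}"
proof -
  have "0 \<in> rec_cone" by (simp add: closed_cell_def)
  then show ?thesis
    using open_face_meets[OF finite_arrangement convex_closed_cell _ order_refl] by blast
qed

lemma rec_face_subset: "rec_face \<subseteq> rec_cone"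
proof (rule open_face_subset[OF finite_arrangement rec_cone_face_of_self])
  show "rec_cone \<noteq> {}" by (auto simp: closed_cell_def intro: exI[of _ 0])
qed

lemma rec_cone_subset_affine_hull: "rec_cone \<subseteq> affine hull rec_face"
  unfolding affine_hull_open_face[OF finite_arrangement rec_face_nonempty]
  by (rule subset_tight_hyperplanes)

lemma rec_cone_antisym:
  assumes ess: "essential A" and "v \<in> rec_cone" "- v \<in> rec_cone"
  shows "v = 0"
proof -
  have "a K \<bullet> v = 0" if "K \<in> A" for K
    using assms(2,3) that by (auto simp: closed_cell_def intro!: order.antisym)
  then have "v \<in> \<Inter>(lin_hyp ` A)" by (simp add: lin_hyp_eq)
  then show ?thesis using ess unfolding essential_def by blast
qed

lemma zero_notin_rec_face:
  assumes ess: "essential A" and nontriv: "rec_cone \<noteq> {0}"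
  shows "0 \<notin> rec_face"
proof
  assume "0 \<in> rec_face"
  then have "A - tight_constraints A a (\<lambda>_. 0) rec_cone = {}" by (auto simp: open_face_def)
  then have "a K \<bullet> v = 0" if "v \<in> rec_cone" "K \<in> A" for v K
    using that by (auto simp: tight_constraints_def)
  then have "rec_cone \<subseteq> \<Inter>(lin_hyp ` A)" by (auto simp: lin_hyp_eq)
  moreover have "0 \<in> rec_cone" by (simp add: closed_cell_def)
  ultimately show False using ess nontriv by (auto simp: essential_def)
qed

abbreviation rec_flat :: "(real^'n) set" where
  "rec_flat \<equiv> {x. \<forall>K\<in>tight_constraints A a (\<lambda>_. 0) rec_cone. a K \<bullet> x = 0}"

lemma sym_rec_cone_subset_rec_flat:
  assumes "v \<in> rec_cone \<or> - v \<in> rec_cone"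
  shows "v \<in> rec_flat"
proof -
  have flat: "u \<in> rec_flat" if "u \<in> rec_cone" for u
    using that subset_tight_hyperplanes[of rec_cone A a "\<lambda>_. 0"] by blast
  from assms show ?thesis
  proof
    assume "- v \<in> rec_cone"
    from flat[OF this] show ?thesis by simp
  qed (rule flat)
qed

lemma aff_dim_sym_rec_face: "aff_dim (rec_face \<union> uminus ` rec_face) = aff_dim rec_flat"
proof (rule order.antisym)
  have "rec_face \<union> uminus ` rec_face \<subseteq> rec_flat"
    using rec_face_subset by (auto intro!: sym_rec_cone_subset_rec_flat)
  then show "aff_dim (rec_face \<union> uminus ` rec_face) \<le> aff_dim rec_flat" by (rule aff_dim_subset)
  show "aff_dim rec_flat \<le> aff_dim (rec_face \<union> uminus ` rec_face)"
    using aff_dim_subset[of rec_face "rec_face \<union> uminus ` rec_face"]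
    by (simp add: aff_dim_open_face[OF finite_arrangement rec_face_nonempty])
qed

lemma inf_face_sym_rec_face:
  assumes ess: "essential A" and nontriv: "rec_cone \<noteq> {0}"
  shows "inf_face A (rec_face \<union> uminus ` rec_face)"
proof -
  let ?T = "tight_constraints A a (\<lambda>_. 0) rec_cone"
  have "K \<in> ?T" if K: "K \<in> A" "K' \<in> ?T" "lin_hyp K = lin_hyp K'" for K K'
  proof -
    have "K' \<in> A" and z: "\<forall>v\<in>rec_cone. a K' \<bullet> v = 0" using K(2) by (auto simp: tight_constraints_def)
    then have "\<forall>v. a K \<bullet> v = 0 \<longleftrightarrow> a K' \<bullet> v = 0" using K(1,3) by (simp add: lin_hyp_eq set_eq_iff)
    then show ?thesis using K(1) z by (simp add: tight_constraints_def)
  qed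
  then have sat: "{K\<in>A. lin_hyp K \<in> lin_hyp ` ?T} = ?T" by (auto simp: tight_constraints_def)
  have sub: "lin_hyp ` ?T \<subseteq> lin_hyp ` A" by (auto simp: tight_constraints_def)
  have strat: "\<Inter>(lin_hyp ` ?T) - \<Union>(lin_hyp ` A - lin_hyp ` ?T) = stratum A a (\<lambda>_. 0) ?T"
    using lin_strata_eq[OF sub] unfolding sat .
  have "0 \<notin> stratum A a (\<lambda>_. 0) ?T"
  proof
    assume "0 \<in> stratum A a (\<lambda>_. 0) ?T"
    then have "A - ?T = {}" by (auto simp: stratum_def)
    then have "0 \<in> rec_face" by (auto simp: open_face_def)
    with zero_notin_rec_face[OF ess nontriv] show False ..
  qed
  then have "rec_face \<in> components (\<Inter>(lin_hyp ` ?T) - \<Union>(lin_hyp ` A - lin_hyp ` ?T) - {0})"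
    unfolding strat using open_face_in_components[OF rec_face_nonempty] by simp
  then show ?thesis unfolding inf_face_def using sub by blast
qed

lemma inf_face_cases:
  assumes ess: "essential A" and "inf_face A T"
  obtains S C where "S \<subseteq> A" "C \<in> components (stratum A a (\<lambda>_. 0) S)" "T = C \<union> uminus ` C"
proof -
  obtain S C where S: "S \<subseteq> lin_hyp ` A" and C: "C \<in> components (\<Inter>S - \<Union>(lin_hyp ` A - S) - {0})"
    and T: "T = C \<union> uminus ` C"
    using assms(2) unfolding inf_face_def by blast
  let ?S = "{K\<in>A. lin_hyp K \<in> S}"
  let ?X = "stratum A a (\<lambda>_. 0) ?S"
  have C': "C \<in> components (?X - {0})" using C unfolding lin_strata_eq[OF S] .
  have "0 \<notin> ?X"
  proof
    assume "0 \<in> ?X"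
    then have "?X \<subseteq> \<Inter>(lin_hyp ` A)" by (auto simp: stratum_def lin_hyp_eq)
    then have "?X - {0} = {}" using ess by (auto simp: essential_def)
    with C' show False by (metis components_empty empty_iff)
  qed
  then have "C \<in> components ?X" using C' by simp
  with T show ?thesis using that[of ?S] by blast
qed

lemma sym_rec_cone_split:
  assumes ess: "essential A" and "connected C"
    and C: "C \<subseteq> {v. v \<noteq> 0 \<and> (v \<in> rec_cone \<or> - v \<in> rec_cone)}"
  shows "C \<subseteq> rec_cone \<or> C \<subseteq> uminus ` rec_cone"
proof -
  have "closed (uminus ` rec_cone)"
    unfolding closed_cell_uminus[symmetric] by (rule closed_closed_cell)
  moreover have "C \<subseteq> rec_cone \<union> uminus ` rec_cone" using C by (auto simp: mem_uminus_image)
  moreover have "rec_cone \<inter> uminus ` rec_cone \<inter> C = {}"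
    using C rec_cone_antisym[OF ess] by (auto simp: mem_uminus_image)
  moreover have "closed rec_cone" by (rule closed_closed_cell)
  ultimately have "\<not> (rec_cone \<inter> C \<noteq> {} \<and> uminus ` rec_cone \<inter> C \<noteq> {})"
    using \<open>connected C\<close> unfolding connected_closed by blast
  then show ?thesis using \<open>C \<subseteq> rec_cone \<union> uminus ` rec_cone\<close> by blast
qed

text \<open>Being connected and avoiding \<open>0\<close>, the component \<open>C\<close> lies in the recession cone or in its
  negative; in the second case the argument is repeated for the opposite orientation.\<close>

lemma inf_face_unique:
  assumes ess: "essential A" and "inf_face A T"
    and IC: "T \<subseteq> {v. v \<noteq> 0 \<and> (v \<in> rec_cone \<or> - v \<in> rec_cone)}"
    and dim: "aff_dim (rec_face \<union> uminus ` rec_face) \<le> aff_dim T"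
  shows "T = rec_face \<union> uminus ` rec_face"
proof -
  obtain S C where S: "S \<subseteq> A" "C \<in> components (stratum A a (\<lambda>_. 0) S)" and T: "T = C \<union> uminus ` C"
    using inf_face_cases[OF ess assms(2)] by blast
  have TL: "C \<union> uminus ` C \<subseteq> rec_flat" using IC T sym_rec_cone_subset_rec_flat by blast
  have dimL: "aff_dim rec_flat \<le> aff_dim (C \<union> uminus ` C)" using dim T aff_dim_sym_rec_face by simp
  have "C \<subseteq> rec_cone \<or> C \<subseteq> uminus ` rec_cone"
    using sym_rec_cone_split[OF ess in_components_connected[OF S(2)]] IC T by blast
  then show ?thesis
  proof
    assume "C \<subseteq> rec_cone"
    from central_open_face_unique[OF order_refl rec_face_nonempty S this TL dimL]
    show ?thesis using T by simp
  next
    assume "C \<subseteq> uminus ` rec_cone"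
    let ?a' = "\<lambda>K. - a K"
    have cell: "closed_cell A ?a' (\<lambda>_. 0) = uminus ` rec_cone" by (rule closed_cell_uminus)
    have face: "open_face A ?a' (\<lambda>_. 0) (closed_cell A ?a' (\<lambda>_. 0)) = uminus ` rec_face"
      unfolding cell by (rule open_face_uminus)
    have flat: "{x. \<forall>K\<in>tight_constraints A ?a' (\<lambda>_. 0) (uminus ` rec_cone). - a K \<bullet> x = 0} = rec_flat"
      unfolding tight_constraints_uminus by simp
    have "C = open_face A ?a' (\<lambda>_. 0) (closed_cell A ?a' (\<lambda>_. 0))"
    proof (rule central_open_face_unique[OF order_refl _ S(1)])
      show "open_face A ?a' (\<lambda>_. 0) (closed_cell A ?a' (\<lambda>_. 0)) \<noteq> {}"
        unfolding face using rec_face_nonempty by simp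
      show "C \<in> components (stratum A ?a' (\<lambda>_. 0) S)" unfolding stratum_uminus by (rule S(2))
    qed (use \<open>C \<subseteq> uminus ` rec_cone\<close> TL dimL in \<open>simp_all only: cell flat\<close>)
    then have "C = uminus ` rec_face" unfolding face .
    then show ?thesis using T by (auto simp: image_image)
  qed
qed

lemma sym_rec_face_subset_hyperplane_iff:
  "rec_face \<union> uminus ` rec_face \<subseteq> {v. c \<bullet> v = 0} \<longleftrightarrow> (\<forall>u\<in>rec_cone. c \<bullet> u = 0)"
proof
  assume "rec_face \<union> uminus ` rec_face \<subseteq> {v. c \<bullet> v = 0}"
  then have "affine hull rec_face \<subseteq> {v. c \<bullet> v = 0}"
    by (intro hull_minimal affine_hyperplane) auto
  then show "\<forall>u\<in>rec_cone. c \<bullet> u = 0" using rec_cone_subset_affine_hull by blast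
qed (use rec_face_subset in auto)

lemma tr_dom_open_cell:
  assumes ess: "essential A" and p: "p \<in> open_cell A a b"
    and unb: "\<not> bounded (open_cell A a b)"
  shows "tr_dom A (open_cell A a b) = rec_face \<union> uminus ` rec_face"
  unfolding tr_dom_def inf_closure_open_cell[OF p]
proof (rule the_max_aff_dim_eqI)
  note nontriv = recession_cone_nontrivial[OF unb]
  show "inf_face A (rec_face \<union> uminus ` rec_face)" by (rule inf_face_sym_rec_face[OF ess nontriv])
  show "rec_face \<union> uminus ` rec_face \<subseteq> {v. v \<noteq> 0 \<and> (v \<in> rec_cone \<or> - v \<in> rec_cone)}"
    using rec_face_subset zero_notin_rec_face[OF ess nontriv] by auto
  show "aff_dim T \<le> aff_dim (rec_face \<union> uminus ` rec_face)"
    if "T \<subseteq> {v. v \<noteq> 0 \<and> (v \<in> rec_cone \<or> - v \<in> rec_cone)}" for T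
  proof -
    have "T \<subseteq> rec_flat" using that sym_rec_cone_subset_rec_flat by blast
    then show ?thesis using aff_dim_subset[OF \<open>T \<subseteq> rec_flat\<close>] aff_dim_sym_rec_face by simp
  qed
qed (rule inf_face_unique[OF ess])

lemma tr_dom_inner_nonzero:
  assumes ess: "essential A" and p: "p \<in> open_cell A a b"
    and unb: "\<not> bounded (open_cell A a b)"
    and grow: "filterlim (\<lambda>x. c \<bullet> x + d) at_top (inf at_infinity (principal (open_cell A a b)))"
    and v: "v \<in> tr_dom A (open_cell A a b)"
  shows "c \<bullet> v \<noteq> 0"
proof -
  have pos: "0 < c \<bullet> u" if "u \<in> rec_face" for u
  proof (rule growing_recession_pos[OF grow p])
    show "u \<in> rec_cone" using that rec_face_subset by blast
    show "u \<noteq> 0" using that zero_notin_rec_face[OF ess recession_cone_nontrivial[OF unb]] by blast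
  qed
  from v show ?thesis
    unfolding tr_dom_open_cell[OF ess p unb] by (auto dest: pos simp: less_imp_neq[symmetric])
qed

lemma bounded_abs_affine_iff_tr_dom_subset:
  assumes ess: "essential A" and p: "p \<in> open_cell A a b"
    and unb: "\<not> bounded (open_cell A a b)"
  shows "bounded ((\<lambda>x. \<bar>c \<bullet> x + d\<bar>) ` open_cell A a b) \<longleftrightarrow>
    tr_dom A (open_cell A a b) \<subseteq> {v. c \<bullet> v = 0} - {0}"
proof -
  have "0 \<notin> rec_face" using zero_notin_rec_face[OF ess recession_cone_nontrivial[OF unb]] .
  then have "0 \<notin> tr_dom A (open_cell A a b)" unfolding tr_dom_open_cell[OF ess p unb] by force
  have "bounded ((\<lambda>x. \<bar>c \<bullet> x + d\<bar>) ` open_cell A a b) \<longleftrightarrow> (\<forall>u\<in>rec_cone. c \<bullet> u = 0)"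
    by (rule bounded_abs_affine_on_open_cell_iff[OF finite_arrangement p])
  also have "\<dots> \<longleftrightarrow> tr_dom A (open_cell A a b) \<subseteq> {v. c \<bullet> v = 0}"
    unfolding tr_dom_open_cell[OF ess p unb] by (rule sym_rec_face_subset_hyperplane_iff[symmetric])
  finally show ?thesis using \<open>0 \<notin> tr_dom A (open_cell A a b)\<close> by blast
qed

lemma ext_support_open_cell:
  assumes ne: "open_cell A a b \<noteq> {}" and abs: "\<And>x. x \<in> closed_cell A a b \<Longrightarrow> \<bar>f x\<bar> = c \<bullet> x + d"
    and y: "y \<in> closed_cell A a b" "\<And>x. x \<in> closed_cell A a b \<Longrightarrow> c \<bullet> x \<le> c \<bullet> y"
  shows "ext_support A f (open_cell A a b) \<noteq> {}"
    and "ext_support A f (open_cell A a b) \<subseteq> closure (open_cell A a b)"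
    and "\<forall>x\<in>ext_support A f (open_cell A a b). \<bar>f x\<bar> = \<bar>f y\<bar>"
proof -
  let ?G = "closed_cell A a b \<inter> {x. c \<bullet> x = c \<bullet> y}"
  have max: "max_set f (open_cell A a b) = ?G"
    using y abs by (auto simp: max_set_def closure_open_cell[OF ne] intro!: order.antisym)
  have G: "?G face_of closed_cell A a b" "?G \<noteq> {}"
    using y by (auto intro: face_of_Int_supporting_hyperplane_le convex_closed_cell)
  then have es: "ext_support A f (open_cell A a b) = open_face A a b ?G"
    unfolding ext_support_def max by (rule the_max_dim_face)
  have sub: "open_face A a b ?G \<subseteq> ?G" by (rule open_face_subset[OF finite_arrangement G])
  show "ext_support A f (open_cell A a b) \<noteq> {}"
    unfolding es using open_face_meets[OF finite_arrangement face_of_imp_convex[OF G(1)] G(2)] by blast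
  show "ext_support A f (open_cell A a b) \<subseteq> closure (open_cell A a b)"
    unfolding es closure_open_cell[OF ne] using sub by blast
  show "\<forall>x\<in>ext_support A f (open_cell A a b). \<bar>f x\<bar> = \<bar>f y\<bar>"
  proof
    fix x assume "x \<in> ext_support A f (open_cell A a b)"
    then have "x \<in> ?G" using sub unfolding es by blast
    then show "\<bar>f x\<bar> = \<bar>f y\<bar>" using abs y(1) by simp
  qed
qed

lemma c_val_open_cell:
  assumes ne: "open_cell A a b \<noteq> {}" and "\<And>x. isCont f x"
    and abs: "\<And>x. x \<in> closed_cell A a b \<Longrightarrow> \<bar>f x\<bar> = c \<bullet> x + d"
    and y: "y \<in> closed_cell A a b" "\<And>x. x \<in> closed_cell A a b \<Longrightarrow> c \<bullet> x \<le> c \<bullet> y" "f y \<noteq> 0"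
    and g: "\<And>x. x \<in> open_cell A a b \<Longrightarrow> g x = exp (\<alpha> * (complex_of_real (ln \<bar>f x\<bar>) + w))"
  shows "c_val A f g (open_cell A a b) = exp (\<alpha> * (complex_of_real (ln \<bar>f y\<bar>) + w))"
  using ext_support_open_cell[OF ne abs y(1,2)] y(3) g
  by (intro c_val_eq[OF open_open_cell[OF finite_arrangement] assms(2)]) auto

lemma abs_affine_max_on_closed_cell:
  assumes p: "p \<in> open_cell A a b" and H: "{x. cf \<bullet> x + df = 0} \<in> A"
    and bd: "bounded ((\<lambda>x. \<bar>cf \<bullet> x + df\<bar>) ` open_cell A a b)"
  obtains c d y where "\<And>x. x \<in> closed_cell A a b \<Longrightarrow> \<bar>cf \<bullet> x + df\<bar> = c \<bullet> x + d"
    "y \<in> closed_cell A a b" "\<And>x. x \<in> closed_cell A a b \<Longrightarrow> c \<bullet> x \<le> c \<bullet> y" "cf \<bullet> y + df \<noteq> 0"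
proof -
  have ne: "open_cell A a b \<noteq> {}" using p by blast
  have "cf \<bullet> x + df \<noteq> 0" if "x \<in> open_cell A a b" for x
    using not_mem_hyperplane_open_cell[OF H that] by simp
  then obtain s where s: "\<And>x. x \<in> open_cell A a b \<Longrightarrow> 0 < s * (cf \<bullet> x + df)"
    "\<And>x. x \<in> closure (open_cell A a b) \<Longrightarrow> \<bar>cf \<bullet> x + df\<bar> = s * (cf \<bullet> x + df)"
    using affine_sign_on_closure[OF convex_connected[OF convex_open_cell]] by blast
  have abs: "\<bar>cf \<bullet> x + df\<bar> = (s *\<^sub>R cf) \<bullet> x + s * df" if "x \<in> closed_cell A a b" for x
    using s(2) that by (simp add: closure_open_cell[OF ne] algebra_simps)
  have rec: "(s *\<^sub>R cf) \<bullet> u \<le> 0" if "u \<in> rec_cone" for u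
    using bd that bounded_abs_affine_on_open_cell_iff[OF finite_arrangement p] by simp
  have "closed_cell A a b \<noteq> {}" using ne open_cell_subset_closed_cell by blast
  then obtain y where y: "y \<in> closed_cell A a b"
    "\<And>x. x \<in> closed_cell A a b \<Longrightarrow> (s *\<^sub>R cf) \<bullet> x \<le> (s *\<^sub>R cf) \<bullet> y"
    using linear_attains_max_on_closed_cell[OF finite_arrangement _ rec] by blast
  have "p \<in> closed_cell A a b" using p open_cell_subset_closed_cell by blast
  moreover have "0 < (s *\<^sub>R cf) \<bullet> p + s * df" using s(1)[OF p] by (simp add: algebra_simps)
  ultimately have "0 < \<bar>cf \<bullet> y + df\<bar>" using abs[OF y(1)] y(2)[of p] by linarith
  then have "cf \<bullet> y + df \<noteq> 0" by simp
  with abs y show ?thesis by (rule that)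
qed

lemma c_val_truncated_open_cell:
  assumes "c0 \<noteq> 0" "{x. c0 \<bullet> x + d0 = t} \<notin> A" and p: "p \<in> open_cell A a b" "c0 \<bullet> p + d0 < t"
    and "\<And>x. isCont f x" and abs: "\<And>x. x \<in> closed_cell A a b \<Longrightarrow> \<bar>f x\<bar> = c \<bullet> x + d"
    and y: "y \<in> closed_cell A a b" "\<And>x. x \<in> closed_cell A a b \<Longrightarrow> c \<bullet> x \<le> c \<bullet> y" "f y \<noteq> 0"
      "c0 \<bullet> y + d0 \<le> t"
    and g: "\<And>x. x \<in> open_cell A a b \<Longrightarrow> g x = exp (\<alpha> * (complex_of_real (ln \<bar>f x\<bar>) + w))"
  shows "c_val (insert {x. c0 \<bullet> x + d0 = t} A) f g {x \<in> open_cell A a b. c0 \<bullet> x + d0 < t}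
    = exp (\<alpha> * (complex_of_real (ln \<bar>f y\<bar>) + w))"
proof -
  define K where "K = {x. (- c0) \<bullet> x = d0 - t}"
  have K_eq: "{x. c0 \<bullet> x + d0 = t} = K" by (auto simp: K_def)
  have "- c0 \<noteq> 0" "{x. (- c0) \<bullet> x = d0 - t} \<notin> A" using assms(1,2) K_eq K_def by auto
  note truncate = insert_hyperplane[OF this, folded K_def]
  interpret truncated: oriented_arrangement "insert K A" "a(K := - c0)" "b(K := d0 - t)"
    by (rule truncate(1))
  have oc: "open_cell (insert K A) (a(K := - c0)) (b(K := d0 - t)) = {x \<in> open_cell A a b. c0 \<bullet> x + d0 < t}"
    unfolding truncate(2) by auto
  have cc: "closed_cell (insert K A) (a(K := - c0)) (b(K := d0 - t)) =
      {x \<in> closed_cell A a b. c0 \<bullet> x + d0 \<le> t}"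
    unfolding truncate(3) by auto
  have ne: "open_cell (insert K A) (a(K := - c0)) (b(K := d0 - t)) \<noteq> {}" using oc p by auto
  have y': "y \<in> closed_cell (insert K A) (a(K := - c0)) (b(K := d0 - t))"
    unfolding cc using y(1,4) by simp
  have abs': "\<bar>f x\<bar> = c \<bullet> x + d" and max': "c \<bullet> x \<le> c \<bullet> y"
    if "x \<in> closed_cell (insert K A) (a(K := - c0)) (b(K := d0 - t))" for x
    using that abs y(2) unfolding cc by auto
  have g': "g x = exp (\<alpha> * (complex_of_real (ln \<bar>f x\<bar>) + w))"
    if "x \<in> open_cell (insert K A) (a(K := - c0)) (b(K := d0 - t))" for x
    using that g unfolding oc by auto
  show ?thesis unfolding K_eq oc[symmetric]
    by (rule truncated.c_val_open_cell[OF ne assms(5) abs' y' max' y(3) g'])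
qed

lemma c_val_truncation_eventually_eq:
  assumes p: "p \<in> open_cell A a b" and H: "{x. cf \<bullet> x + df = 0} \<in> A"
    and bd: "bounded ((\<lambda>x. \<bar>cf \<bullet> x + df\<bar>) ` open_cell A a b)"
    and g: "branch_pow (\<lambda>x. cf \<bullet> x + df) \<alpha> (open_cell A a b) g" and "c0 \<noteq> 0"
  shows "\<forall>\<^sub>F t in at_top.
    c_val (insert {x. c0 \<bullet> x + d0 = t} A) (\<lambda>x. cf \<bullet> x + df) g {x \<in> open_cell A a b. c0 \<bullet> x + d0 < t}
      = c_val A (\<lambda>x. cf \<bullet> x + df) g (open_cell A a b)"
proof -
  let ?f = "\<lambda>x. cf \<bullet> x + df"
  obtain c d y where abs: "\<And>x. x \<in> closed_cell A a b \<Longrightarrow> \<bar>cf \<bullet> x + df\<bar> = c \<bullet> x + d"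
    and y: "y \<in> closed_cell A a b" "\<And>x. x \<in> closed_cell A a b \<Longrightarrow> c \<bullet> x \<le> c \<bullet> y"
      "cf \<bullet> y + df \<noteq> 0"
    using abs_affine_max_on_closed_cell[OF p H bd] by blast
  have "\<forall>x\<in>open_cell A a b. ?f x \<noteq> 0" using not_mem_hyperplane_open_cell[OF H] by auto
  moreover have "continuous_on (open_cell A a b) ?f" by (intro continuous_intros)
  ultimately obtain w
    where w: "\<And>x. x \<in> open_cell A a b \<Longrightarrow> g x = exp (\<alpha> * (complex_of_real (ln \<bar>?f x\<bar>) + w))"
    using branch_pow_eq_exp_ln_abs[OF convex_connected[OF convex_open_cell] _ _ g] by blast
  have cont: "isCont ?f x" for x by (intro continuous_intros)
  have "c_val A ?f g (open_cell A a b) = exp (\<alpha> * (complex_of_real (ln \<bar>?f y\<bar>) + w))"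
    using p by (intro c_val_open_cell[OF _ cont abs y w]) auto
  moreover have "\<forall>\<^sub>F t in at_top. c_val (insert {x. c0 \<bullet> x + d0 = t} A) ?f g
      {x \<in> open_cell A a b. c0 \<bullet> x + d0 < t} = exp (\<alpha> * (complex_of_real (ln \<bar>?f y\<bar>) + w))"
    using eventually_level_set_notin[OF finite_arrangement \<open>c0 \<noteq> 0\<close>, of d0]
      eventually_gt_at_top[of "max (c0 \<bullet> y + d0) (c0 \<bullet> p + d0)"]
    by eventually_elim (rule c_val_truncated_open_cell[OF \<open>c0 \<noteq> 0\<close> _ p _ cont abs y _ w]; simp)
  ultimately show ?thesis by simp
qed

end

lemma domain_eq_open_cell:
  fixes A :: "(real^'n) set set"
  assumes "arrangement A" "domain A D"
  obtains a b where "oriented_arrangement A a b" "D = open_cell A a b"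
proof -
  have D: "D \<in> components (UNIV - \<Union>A)" using assms(2) by (simp add: domain_def)
  then have "connected D" "D \<noteq> {}" "D \<subseteq> UNIV - \<Union>A"
    using in_components_connected in_components_nonempty in_components_subset by blast+
  have "\<exists>ab. fst ab \<noteq> 0 \<and> K = {x. fst ab \<bullet> x = snd ab} \<and> (\<forall>x\<in>D. snd ab < fst ab \<bullet> x)"
    if K: "K \<in> A" for K
  proof -
    have "is_hyperplane K" "D \<inter> K = {}" using K assms(1) \<open>D \<subseteq> UNIV - \<Union>A\<close>
      by (auto simp: arrangement_def)
    then obtain a b where "a \<noteq> 0" "K = {x. a \<bullet> x = b}" "\<And>x. x \<in> D \<Longrightarrow> b < a \<bullet> x"
      using hyperplane_oriented_towards[OF _ \<open>connected D\<close> \<open>D \<noteq> {}\<close>] by blast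
    then show ?thesis by (intro exI[of _ "(a, b)"]) auto
  qed
  then have "\<forall>K\<in>A. \<exists>ab. fst ab \<noteq> 0 \<and> K = {x. fst ab \<bullet> x = snd ab} \<and> (\<forall>x\<in>D. snd ab < fst ab \<bullet> x)"
    by blast
  then obtain ab where ab: "\<forall>K\<in>A. fst (ab K) \<noteq> 0 \<and> K = {x. fst (ab K) \<bullet> x = snd (ab K)} \<and>
      (\<forall>x\<in>D. snd (ab K) < fst (ab K) \<bullet> x)"
    by (rule bchoice[THEN exE])
  let ?a = "\<lambda>K. fst (ab K)" and ?b = "\<lambda>K. snd (ab K)"
  have sub: "D \<subseteq> open_cell A ?a ?b" using ab by (auto simp: open_cell_def)
  moreover have "open_cell A ?a ?b \<subseteq> D"
  proof (rule components_maximal[OF D convex_connected[OF convex_open_cell]])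
    have "x \<notin> K" if "x \<in> open_cell A ?a ?b" "K \<in> A" for x K
      using that ab mem_hyperplane_iff[of K "?a K" "?b K" x] by (auto simp: open_cell_def)
    then show "open_cell A ?a ?b \<subseteq> UNIV - \<Union>A" by blast
    show "D \<inter> open_cell A ?a ?b \<noteq> {}" using sub \<open>D \<noteq> {}\<close> by blast
  qed
  moreover have "oriented_arrangement A ?a ?b"
    using assms(1) ab by unfold_locales (auto simp: arrangement_def)
  ultimately show ?thesis using that by blast
qed

theorem lemma8:
  fixes A :: "(real^'n) set set" and f0 f :: "real^'n \<Rightarrow> real"
    and \<alpha> :: complex and D :: "(real^'n) set" and g :: "real^'n \<Rightarrow> complex"
  assumes "arrangement A" and "essential A"
    and "affine_fun f0" and "\<exists>x y. f0 x \<noteq> f0 y"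
    and "affine_fun f" and "{x. f x = 0} \<in> A"
    and "growing_domain A f0 D"
    and "branch_pow f \<alpha> D g"
  shows "(bounded ((\<lambda>x. \<bar>f x\<bar>) ` D) \<longleftrightarrow> tr_dom A D \<subseteq> tr_hyp {x. f x = 0})
    \<and> (tr_dom A D \<subseteq> tr_hyp {x. f x = 0} \<longleftrightarrow>
         (tr_dom A D \<subseteq> h_dom f0 \<and> (\<forall>v\<in>tr_dom A D. h_fun f f0 v = 0)))
    \<and> (bounded ((\<lambda>x. \<bar>f x\<bar>) ` D) \<longrightarrow>
         (\<forall>\<^sub>F t in at_top.
            c_val (insert {x. f0 x = t} A) f g {x \<in> D. f0 x < t} = c_val A f g D))"
proof -
  obtain cf df c0 d0 where f: "f = (\<lambda>x. cf \<bullet> x + df)" and f0: "f0 = (\<lambda>x. c0 \<bullet> x + d0)"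
    using assms(3,5) by (auto simp: affine_fun_def)
  have "c0 \<noteq> 0" using assms(4) f0 by auto
  have dom: "domain A D" "\<not> bounded D" and grow: "filterlim f0 at_top (inf at_infinity (principal D))"
    using assms(7) by (auto simp: growing_domain_def)
  obtain a b where "oriented_arrangement A a b" and D: "D = open_cell A a b"
    using domain_eq_open_cell[OF assms(1) dom(1)] by blast
  then interpret oriented_arrangement A a b by simp
  obtain p where p: "p \<in> open_cell A a b"
    using dom(1) in_components_nonempty unfolding D domain_def by blast
  note cell = assms(2) p dom(2)[unfolded D]
  have trH: "tr_hyp {x. f x = 0} = {v. lin_part f v = 0} - {0}"
    unfolding f lin_part_affine using zero_set_normal_nonzero[OF assms(6)[unfolded f] p]
    by (rule tr_hyp_affine_zero_set)
  have part1: "bounded ((\<lambda>x. \<bar>f x\<bar>) ` D) \<longleftrightarrow> tr_dom A D \<subseteq> tr_hyp {x. f x = 0}"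
    unfolding trH unfolding D f lin_part_affine by (rule bounded_abs_affine_iff_tr_dom_subset[OF cell])
  have "\<forall>v\<in>tr_dom A D. v \<noteq> 0 \<and> lin_part f0 v \<noteq> 0"
    using tr_dom_inner_nonzero[OF cell grow[unfolded f0 D]] unfolding D f0 lin_part_affine by force
  then have part2: "tr_dom A D \<subseteq> tr_hyp {x. f x = 0} \<longleftrightarrow>
      (tr_dom A D \<subseteq> h_dom f0 \<and> (\<forall>v\<in>tr_dom A D. h_fun f f0 v = 0))"
    unfolding trH by (rule subset_zero_set_iff_h_fun_zero)
  have "bounded ((\<lambda>x. \<bar>f x\<bar>) ` D) \<longrightarrow>
      (\<forall>\<^sub>F t in at_top. c_val (insert {x. f0 x = t} A) f g {x \<in> D. f0 x < t} = c_val A f g D)"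
    using assms(6,8) unfolding D f f0 by (intro impI c_val_truncation_eventually_eq[OF p _ _ _ \<open>c0 \<noteq> 0\<close>])
  with part1 part2 show ?thesis by blast
qed

end
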